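(* Consider a multilayer network with $M$ layers, where layer $h\in\{1,\dots,M\}$ has $N_h$ nodes, node set $V=\{(i,h): h=1,\dots,M,\ i=1,\dots,N_h\}$, and nonnegative weights $w_{ij}(hk)$ between node $i$ of layer $h$ and node $j$ of layer $k$; assume the network is weighted, undirected and connected, so that the multilayer Laplacian $\mathcal{L}$ (defined in the context) is symmetric. Let $f_{ih}:\mathbb{R}\to\mathbb{R}$, $(i,h)\in V$, and suppose $\tilde f(Y)=\sum_{(i,h)\in V} f_{ih}(y_{ih})$, $Y=(y_{ih})\in\mathbb{R}^V$, is a twice continuously differentiable convex function. Consider the saddle-point dynamics $$\dot Y(t)=-\nabla\tilde f(Y(t))-\mathcal{L}Y(t)-\mathcal{L}\Lambda(t),\qquad \dot\Lambda(t)=\mathcal{L}Y(t),$$ with $Y(t),\Lambda(t)\in\mathbb{R}^V$, which is the saddle-point flow of the augmented Lagrangian $\mathcal{L}_m(Y,\Lambda)=\tilde f(Y)+\langle\Lambda,\mathcal{L}Y\rangle+\tfrac12\langle Y,\mathcal{L}Y\rangle$. Then every trajectory $(Y(t),\Lambda(t))$ converges to a unique saddle point $(Y^\star,\Lambda^\star)$ of $\mathcal{L}_m$, characterized by: (1) $Y^\star=x^\star U$, where $x^\star\in\mathbb{R}$ is an optimizer of the primal problem $\min_{x\in\mathbb{R}}\sum_{(i,h)\in V}f_{ih}(x)$; (2) $\Lambda^\star=\bar\Lambda+\operatorname{average}(\Lambda_0)\,U$, where $\operatorname{average}(\Lambda_0)=\frac{1}{|V|}\sum_{(i,h)\in V}\Lambda_{ih}(0)$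 and $\bar\Lambda\in\mathbb{R}^V$ with $\bar\Lambda\perp U$ satisfies $\mathcal{L}\bar\Lambda+\nabla\tilde f(Y^\star)=0$.
   Context: $U\in\mathbb{R}^V$ is the all-ones tensor. For $T\in\mathbb{R}^V$, $(\mathcal{L}T)_{ih}=\sum_{k=1}^M\sum_{j=1}^{N_k} l_{ij}(hk)\,t_{jk}$, where $l_{ij}(hk)=\Big[\sum_{n=1}^M\sum_{m=1}^{N_n} w_{mi}(nh)\Big]\delta_{ij}\delta_{hk}-w_{ij}(hk)$ (the multilayer combinatorial Laplacian tensor; $\delta$ is the Kronecker delta). Undirected means $w_{ij}(hk)=w_{ji}(kh)$; connected means the graph on $V$ with an edge between $(i,h)$ and $(j,k)$ whenever $w_{ij}(hk)>0$ is connected. $\langle A,B\rangle=\sum_{(i,h)\in V}a_{ih}b_{ih}$, and $\bar\Lambda\perp U$ means $\langle\bar\Lambda,U\rangle=0$. $\nabla\tilde f(Y)$ has components $f_{ih}'(y_{ih})$. A saddle point of $\mathcal{L}_m$ is a solution of $\min_Y\max_\Lambda\mathcal{L}_m(Y,\Lambda)$. *)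

theory Defs
  imports "HOL-Analysis.Analysis"
begin

type_synonym node = "nat \<times> nat"   (* (i,h): node i of layer h *)
type_synonym tensor = "node \<Rightarrow> real"  (* element of R^V; values off V are irrelevant *)

definition nodes :: "nat \<Rightarrow> (nat \<Rightarrow> nat) \<Rightarrow> node set" where
  "nodes M N = {(i,h). 1 \<le> h \<and> h \<le> M \<and> 1 \<le> i \<and> i \<le> N h}"

text \<open>Weights: w i j h k is the weight between node i of layer h and node j of layer k.\<close>

definition ml_laplacian ::
  "node set \<Rightarrow> (nat \<Rightarrow> nat \<Rightarrow> nat \<Rightarrow> nat \<Rightarrow> real) \<Rightarrow> tensor \<Rightarrow> tensor" where
  "ml_laplacian V w T = (\<lambda>(i,h). \<Sum>(j,k)\<in>V.
      ((\<Sum>(m,n)\<in>V. w m i n h) * (if i = j then 1 else 0) * (if h = k then 1 else 0)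
        - w i j h k) * T (j,k))"

definition ml_undirected :: "node set \<Rightarrow> (nat \<Rightarrow> nat \<Rightarrow> nat \<Rightarrow> nat \<Rightarrow> real) \<Rightarrow> bool" where
  "ml_undirected V w = (\<forall>(i,h)\<in>V. \<forall>(j,k)\<in>V. w i j h k = w j i k h)"

definition ml_connected :: "node set \<Rightarrow> (nat \<Rightarrow> nat \<Rightarrow> nat \<Rightarrow> nat \<Rightarrow> real) \<Rightarrow> bool" where
  "ml_connected V w = (\<forall>a\<in>V. \<forall>b\<in>V.
      (a, b) \<in> {((i,h),(j,k)). (i,h) \<in> V \<and> (j,k) \<in> V \<and> w i j h k > 0}\<^sup>*)"

definition ones :: tensor where "ones = (\<lambda>_. 1)"

definition ml_inner :: "node set \<Rightarrow> tensor \<Rightarrow> tensor \<Rightarrow> real" where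
  "ml_inner V A B = (\<Sum>v\<in>V. A v * B v)"

definition ftilde :: "node set \<Rightarrow> (node \<Rightarrow> real \<Rightarrow> real) \<Rightarrow> tensor \<Rightarrow> real" where
  "ftilde V f Y = (\<Sum>v\<in>V. f v (Y v))"

definition grad_ftilde :: "(node \<Rightarrow> real \<Rightarrow> real) \<Rightarrow> tensor \<Rightarrow> tensor" where
  "grad_ftilde f Y = (\<lambda>v. deriv (f v) (Y v))"

definition ftilde_convex :: "node set \<Rightarrow> (node \<Rightarrow> real \<Rightarrow> real) \<Rightarrow> bool" where
  "ftilde_convex V f = (\<forall>Y Z. \<forall>t\<in>{0..1::real}.
     ftilde V f (\<lambda>v. (1 - t) * Y v + t * Z v) \<le> (1 - t) * ftilde V f Y + t * ftilde V f Z)"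

definition aug_lagrangian ::
  "node set \<Rightarrow> (nat \<Rightarrow> nat \<Rightarrow> nat \<Rightarrow> nat \<Rightarrow> real) \<Rightarrow> (node \<Rightarrow> real \<Rightarrow> real)
     \<Rightarrow> tensor \<Rightarrow> tensor \<Rightarrow> real" where
  "aug_lagrangian V w f Y Lam = ftilde V f Y + ml_inner V Lam (ml_laplacian V w Y)
      + 1/2 * ml_inner V Y (ml_laplacian V w Y)"

definition is_saddle_point ::
  "node set \<Rightarrow> (nat \<Rightarrow> nat \<Rightarrow> nat \<Rightarrow> nat \<Rightarrow> real) \<Rightarrow> (node \<Rightarrow> real \<Rightarrow> real)
     \<Rightarrow> tensor \<Rightarrow> tensor \<Rightarrow> bool" where
  "is_saddle_point V w f Ys Ls =
     (\<forall>Y Lam. aug_lagrangian V w f Ys Lam \<le> aug_lagrangian V w f Ys Ls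
            \<and> aug_lagrangian V w f Ys Ls \<le> aug_lagrangian V w f Y Ls)"

end

(*
  Fix an optimum x_opt of sum_v f_v and a multiplier L0 with L L0 = -grad f(x_opt U): it exists
  because the Laplacian L of a connected undirected network is symmetric with kernel span U, while
  sum_v f_v'(x_opt) = 0. Along the flow, V = |Y - x_opt U|^2 / 2 + |Lambda - L0|^2 / 2 decreases at
  the rate sum_v (y_v - x_opt) (f_v'(y_v) - f_v'(x_opt)) + <Y, L Y>, where both terms are
  nonnegative by convexity of the f_v and positive semidefiniteness of L. So the trajectory is
  bounded and Lipschitz, and Barbalat's lemma makes both terms vanish: Y reaches consensus and
  grad f(Y) converges to grad f(x_opt U). As d/dt Lambda = L Y tends to 0 while Y stays bounded,
  also L Lambda + grad f(x_opt U) tends to 0, which together with the conserved sum of Lambda forces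
  Lambda to converge to L0 + c U. Finally, a limit point l of the consensus value along a sequence
  of times yields a second equilibrium (l U, lim Lambda); its distance V is nonincreasing and tends
  to 0 along that sequence, hence Y converges to l U.
*)

theory Submission
  imports Defs "Jordan_Normal_Form.Determinant"
begin

section \<open>Asymptotics of scalar differential relations\<close>

lemma mvt_nonneg_reals:
  fixes f f' :: "real \<Rightarrow> real"
  assumes deriv: "\<And>t. t \<ge> 0 \<Longrightarrow> (f has_real_derivative f' t) (at t within {0..})"
    and "0 \<le> a" "a \<le> b"
  obtains x where "a \<le> x" "x \<le> b" "f b - f a = f' x * (b - a)"
proof -
  have "\<exists>x\<in>{a..b}. f b - f a = f' x * (b - a)"
  proof (rule mvt_very_simple[OF \<open>a \<le> b\<close>])
    fix x assume "a \<le> x" "x \<le> b"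
    with assms have "(f has_real_derivative f' x) (at x within {a..b})"
      by (intro DERIV_subset[OF deriv]) auto
    then show "(f has_derivative (\<lambda>h. f' x * h)) (at x within {a..b})"
      by (simp add: has_field_derivative_imp_has_derivative)
  qed
  with that show ?thesis by auto
qed

lemma antimono_if_deriv_nonpos:
  fixes f f' :: "real \<Rightarrow> real"
  assumes "\<And>t. t \<ge> 0 \<Longrightarrow> (f has_real_derivative f' t) (at t within {0..})"
    and "\<And>t. t \<ge> 0 \<Longrightarrow> f' t \<le> 0" and "0 \<le> a" "a \<le> b"
  shows "f b \<le> f a"
proof -
  obtain x where "a \<le> x" "f b - f a = f' x * (b - a)"
    using mvt_nonneg_reals[OF assms(1,3,4)] .
  moreover have "f' x * (b - a) \<le> 0"
    using assms(2)[of x] \<open>a \<le> x\<close> assms(3,4) by (intro mult_nonpos_nonneg) auto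
  ultimately show ?thesis by simp
qed

lemma lipschitz_on_if_deriv_bounded:
  fixes f f' :: "real \<Rightarrow> real"
  assumes deriv: "\<And>t. t \<ge> 0 \<Longrightarrow> (f has_real_derivative f' t) (at t within {0..})"
    and "0 \<le> a" and bound: "\<And>t. t \<ge> a \<Longrightarrow> \<bar>f' t\<bar> \<le> B"
  shows "B-lipschitz_on {a..} f"
proof (rule lipschitz_on_leI)
  fix s t assume "s \<in> {a..}" "t \<in> {a..}" "s \<le> t"
  then obtain x where x: "s \<le> x" "f t - f s = f' x * (t - s)"
    using mvt_nonneg_reals[OF deriv, of s t] \<open>0 \<le> a\<close> by auto
  have "\<bar>f' x * (t - s)\<bar> \<le> B * \<bar>t - s\<bar>"
    unfolding abs_mult using bound[of x] \<open>s \<in> {a..}\<close> x(1) by (intro mult_right_mono) auto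
  then show "dist (f s) (f t) \<le> B * dist s t"
    using x(2) by (simp add: dist_real_def abs_minus_commute)
next
  show "0 \<le> B" using bound[of a] by linarith
qed

lemma dissipation_drop_if_lipschitz:
  fixes E \<phi> :: "real \<Rightarrow> real"
  assumes deriv: "\<And>t. t \<ge> 0 \<Longrightarrow> (E has_real_derivative - \<phi> t) (at t within {0..})"
    and lip: "K-lipschitz_on {0..} \<phi>" and "t \<ge> 0" "d \<ge> 0" "K * d \<le> \<phi> t / 2"
  shows "E (t + d) \<le> E t - d * \<phi> t / 2"
proof -
  obtain x where x: "t \<le> x" "x \<le> t + d" "E (t + d) - E t = - \<phi> x * (t + d - t)"
    using mvt_nonneg_reals[OF deriv \<open>t \<ge> 0\<close>, of "t + d"] \<open>d \<ge> 0\<close> by auto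
  have "\<bar>\<phi> x - \<phi> t\<bar> \<le> K * (x - t)"
    using lipschitz_onD[OF lip, of x t] x \<open>t \<ge> 0\<close> by (simp add: dist_real_def)
  also have "\<dots> \<le> K * d"
    using x lipschitz_on_nonneg[OF lip] by (intro mult_left_mono) auto
  finally have "\<phi> t / 2 \<le> \<phi> x" using assms(5) by linarith
  then have "d * \<phi> t / 2 \<le> d * \<phi> x" using mult_left_mono[OF _ \<open>d \<ge> 0\<close>] by fastforce
  then show ?thesis using x(3) by (simp add: algebra_simps)
qed

lemma barbalat:
  fixes E \<phi> :: "real \<Rightarrow> real"
  assumes deriv: "\<And>t. t \<ge> 0 \<Longrightarrow> (E has_real_derivative - \<phi> t) (at t within {0..})"
    and \<phi>_nonneg: "\<And>t. t \<ge> 0 \<Longrightarrow> \<phi> t \<ge> 0" and E_nonneg: "\<And>t. t \<ge> 0 \<Longrightarrow> E t \<ge> 0"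
    and lip: "K-lipschitz_on {0..} \<phi>"
  shows "(\<phi> \<longlongrightarrow> 0) at_top"
proof (rule ccontr)
  assume "\<not> (\<phi> \<longlongrightarrow> 0) at_top"
  then obtain e where e: "e > 0" "\<not> eventually (\<lambda>t. dist (\<phi> t) 0 < e) at_top"
    unfolding tendsto_iff by blast
  have large: "\<exists>t\<ge>s. \<phi> t \<ge> e" for s
  proof (rule ccontr)
    assume "\<not> (\<exists>t\<ge>s. \<phi> t \<ge> e)"
    then have "\<forall>t\<ge>max s 0. dist (\<phi> t) 0 < e" using \<phi>_nonneg by (auto simp: dist_real_def)
    with e(2) show False unfolding eventually_at_top_linorder by blast
  qed
  define d where "d = e / (2 * K + 1)"
  have d: "d > 0" "K * d \<le> e / 2"
    using e lipschitz_on_nonneg[OF lip] unfolding d_def by (auto simp: field_simps)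
  have E_antimono: "E t \<le> E s" if "0 \<le> s" "s \<le> t" for s t
    by (rule antimono_if_deriv_nonpos[OF deriv _ that]) (use \<phi>_nonneg in auto)
  \<comment> \<open>\<open>\<phi> \<ge> e\<close> happens at arbitrarily late times, and each time costs \<open>E\<close> at least \<open>d e / 2\<close>\<close>
  have "\<exists>t\<ge>0. E t \<le> E 0 - real n * (d * e / 2)" for n
  proof (induction n)
    case (Suc n)
    then obtain t where t: "t \<ge> 0" "E t \<le> E 0 - real n * (d * e / 2)" by blast
    obtain s where s: "s \<ge> t" "\<phi> s \<ge> e" using large by blast
    have "E (s + d) \<le> E s - d * \<phi> s / 2"
      using dissipation_drop_if_lipschitz[OF deriv lip, of s d] s t d by auto
    also have "\<dots> \<le> E t - d * e / 2"
    proof -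
      have "d * e \<le> d * \<phi> s" using s(2) d(1) by (intro mult_left_mono) auto
      then show ?thesis using E_antimono[of t s] s t by linarith
    qed
    finally have "E (s + d) \<le> E 0 - real (Suc n) * (d * e / 2)"
      using t(2) unfolding of_nat_Suc distrib_right by linarith
    with t s d(1) show ?case by (intro exI[of _ "s + d"]) auto
  qed auto
  moreover obtain n :: nat where "E 0 < real n * (d * e / 2)"
    using reals_Archimedean3[of "d * e / 2"] d(1) e(1) by auto
  ultimately show False using E_nonneg by (meson diff_less_0_iff_less le_less_trans not_le)
qed

lemma drift_window_bound:
  fixes y u e u' :: "real \<Rightarrow> real"
  assumes y_deriv: "\<And>t. t \<ge> 0 \<Longrightarrow> (y has_real_derivative u t + e t) (at t within {0..})"
    and u_deriv: "\<And>t. t \<ge> 0 \<Longrightarrow> (u has_real_derivative u' t) (at t within {0..})"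
    and y_bounded: "\<And>t. t \<ge> 0 \<Longrightarrow> \<bar>y t\<bar> \<le> R"
    and small: "\<And>s. s \<ge> N \<Longrightarrow> \<bar>e s\<bar> \<le> \<eta> \<and> \<bar>u' s\<bar> \<le> \<delta>"
    and "0 \<le> N" "N \<le> t" "0 < T"
  shows "T * \<bar>u t\<bar> \<le> 2 * R + (\<delta> * T + \<eta>) * T"
proof -
  \<comment> \<open>over \<open>[t, t + T]\<close>, \<open>y\<close> moves by \<open>T u t\<close> up to the small drift of \<open>u\<close> and the error \<open>e\<close>\<close>
  define h where "h s = y s - s * u t" for s
  have h_deriv: "(h has_real_derivative u s + e s - u t) (at s within {0..})" if "s \<ge> 0" for s
    using DERIV_diff[OF y_deriv[OF that] DERIV_cmult_right[OF DERIV_ident, of "u t"]]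
    by (simp add: h_def[abs_def])
  obtain x where x: "t \<le> x" "x \<le> t + T" "h (t + T) - h t = (u x + e x - u t) * (t + T - t)"
    using mvt_nonneg_reals[OF h_deriv, of t "t + T"] assms(5-7) by auto
  have "\<delta>-lipschitz_on {N..} u"
    by (rule lipschitz_on_if_deriv_bounded[OF u_deriv \<open>0 \<le> N\<close>]) (use small in auto)
  then have "\<bar>u x - u t\<bar> \<le> \<delta> * (x - t)"
    using lipschitz_onD[of \<delta> "{N..}" u x t] x \<open>N \<le> t\<close> by (simp add: dist_real_def)
  also have "\<dots> \<le> \<delta> * T"
    using x small[of t] \<open>N \<le> t\<close> by (intro mult_left_mono) auto
  finally have "\<bar>u x + e x - u t\<bar> \<le> \<delta> * T + \<eta>"
    using small[of x] x(1) \<open>N \<le> t\<close> abs_triangle_ineq[of "u x - u t" "e x"] by (simp add: algebra_simps)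
  then have "\<bar>h (t + T) - h t\<bar> \<le> (\<delta> * T + \<eta>) * T"
    unfolding x(3) abs_mult using \<open>0 < T\<close> by (simp add: mult_right_mono)
  moreover have "T * u t = (y (t + T) - y t) - (h (t + T) - h t)"
    unfolding h_def by (simp add: algebra_simps)
  then have "T * \<bar>u t\<bar> \<le> \<bar>y (t + T) - y t\<bar> + \<bar>h (t + T) - h t\<bar>"
    using \<open>0 < T\<close> by (simp add: abs_mult)
  moreover have "\<bar>y (t + T) - y t\<bar> \<le> 2 * R"
    using y_bounded[of t] y_bounded[of "t + T"] assms(5-7) by auto
  ultimately show ?thesis by linarith
qed

lemma drift_tendsto_0_if_bounded:
  fixes y u e u' :: "real \<Rightarrow> real"
  assumes y_deriv: "\<And>t. t \<ge> 0 \<Longrightarrow> (y has_real_derivative u t + e t) (at t within {0..})"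
    and u_deriv: "\<And>t. t \<ge> 0 \<Longrightarrow> (u has_real_derivative u' t) (at t within {0..})"
    and y_bounded: "\<And>t. t \<ge> 0 \<Longrightarrow> \<bar>y t\<bar> \<le> R"
    and e_lim: "(e \<longlongrightarrow> 0) at_top" and u'_lim: "(u' \<longlongrightarrow> 0) at_top"
  shows "(u \<longlongrightarrow> 0) at_top"
proof (rule tendstoI)
  fix \<epsilon> :: real assume "\<epsilon> > 0"
  have "R \<ge> 0" using y_bounded[of 0] by linarith
  define T where "T = 4 * R / \<epsilon> + 1"
  have T: "T > 0" "4 * R < \<epsilon> * T"
    using \<open>R \<ge> 0\<close> \<open>\<epsilon> > 0\<close> unfolding T_def by (auto simp: field_simps add_pos_nonneg)
  have "eventually (\<lambda>s. \<bar>e s\<bar> < \<epsilon> / 4) at_top"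
    using tendstoD[OF e_lim, of "\<epsilon> / 4"] \<open>\<epsilon> > 0\<close> by (simp add: dist_real_def)
  moreover have "eventually (\<lambda>s. \<bar>u' s\<bar> < \<epsilon> / (4 * T)) at_top"
    using tendstoD[OF u'_lim, of "\<epsilon> / (4 * T)"] \<open>\<epsilon> > 0\<close> T(1) by (simp add: dist_real_def)
  ultimately have "eventually (\<lambda>s. \<bar>e s\<bar> \<le> \<epsilon> / 4 \<and> \<bar>u' s\<bar> \<le> \<epsilon> / (4 * T) \<and> s \<ge> 0) at_top"
    using eventually_ge_at_top[of 0] by eventually_elim auto
  then obtain N where N: "N \<ge> 0" "\<And>s. s \<ge> N \<Longrightarrow> \<bar>e s\<bar> \<le> \<epsilon> / 4 \<and> \<bar>u' s\<bar> \<le> \<epsilon> / (4 * T)"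
    unfolding eventually_at_top_linorder by (meson order_refl)
  show "eventually (\<lambda>t. dist (u t) 0 < \<epsilon>) at_top"
    using eventually_ge_at_top[of N]
  proof eventually_elim
    fix t assume "t \<ge> N"
    have "T * \<bar>u t\<bar> \<le> 2 * R + (\<epsilon> / (4 * T) * T + \<epsilon> / 4) * T"
      using drift_window_bound[OF y_deriv u_deriv y_bounded N(2) N(1) \<open>t \<ge> N\<close> T(1)] .
    also have "\<dots> = 2 * R + T * \<epsilon> / 2" using T(1) by (simp add: field_simps)
    also have "\<dots> < T * \<epsilon>" using T(2) by (simp add: mult.commute)
    finally show "dist (u t) 0 < \<epsilon>" using T(1) by simp
  qed
qed

lemma antimono_tendsto_0_from_sequence:
  fixes f :: "real \<Rightarrow> real" and \<tau> :: "nat \<Rightarrow> real"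
  assumes antimono: "\<And>s t. 0 \<le> s \<Longrightarrow> s \<le> t \<Longrightarrow> f t \<le> f s"
    and nonneg: "\<And>t. t \<ge> 0 \<Longrightarrow> 0 \<le> f t"
    and \<tau>: "filterlim \<tau> at_top sequentially" and lim: "(\<lambda>k. f (\<tau> k)) \<longlonglongrightarrow> 0"
  shows "(f \<longlongrightarrow> 0) at_top"
proof (rule tendstoI)
  fix \<epsilon> :: real assume "\<epsilon> > 0"
  have "eventually (\<lambda>k. \<bar>f (\<tau> k)\<bar> < \<epsilon>) sequentially"
    using tendstoD[OF lim \<open>\<epsilon> > 0\<close>] by (simp add: dist_real_def)
  moreover have "eventually (\<lambda>k. 0 \<le> \<tau> k) sequentially"
    using \<tau> by (simp add: filterlim_at_top)
  ultimately have "eventually (\<lambda>k. \<bar>f (\<tau> k)\<bar> < \<epsilon> \<and> 0 \<le> \<tau> k) sequentially"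
    by (rule eventually_conj)
  then obtain k where k: "f (\<tau> k) < \<epsilon>" "\<tau> k \<ge> 0"
    unfolding eventually_sequentially by force
  show "eventually (\<lambda>t. dist (f t) 0 < \<epsilon>) at_top"
    using eventually_ge_at_top[of "\<tau> k"]
  proof eventually_elim
    fix t assume "\<tau> k \<le> t"
    then have "f t \<le> f (\<tau> k)" "0 \<le> f t" using antimono nonneg k(2) by auto
    with k(1) show "dist (f t) 0 < \<epsilon>" by (simp add: dist_real_def)
  qed
qed

lemma tendsto_average_if_differences_tendsto_0:
  fixes X :: "'b \<Rightarrow> 'a \<Rightarrow> real"
  assumes "finite V" "a \<in> V"
    and diff: "\<And>b. b \<in> V \<Longrightarrow> ((\<lambda>t. X t a - X t b) \<longlongrightarrow> 0) F"
    and sum: "eventually (\<lambda>t. (\<Sum>v\<in>V. X t v) = S) F"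
  shows "((\<lambda>t. X t a) \<longlongrightarrow> S / card V) F"
proof -
  have n: "real (card V) > 0" using assms(1,2) card_gt_0_iff by auto
  have "((\<lambda>t. (\<Sum>b\<in>V. X t a - X t b) / card V) \<longlongrightarrow> 0) F"
    by (intro tendsto_divide_zero tendsto_null_sum diff)
  moreover have "eventually (\<lambda>t. (\<Sum>b\<in>V. X t a - X t b) / card V = X t a - S / card V) F"
    using sum
  proof eventually_elim
    fix t assume "(\<Sum>v\<in>V. X t v) = S"
    then have "(\<Sum>b\<in>V. X t a - X t b) = real (card V) * X t a - S"
      by (simp add: sum_subtractf)
    then show "(\<Sum>b\<in>V. X t a - X t b) / card V = X t a - S / card V"
      using n by (simp add: diff_divide_distrib)
  qed
  ultimately have "((\<lambda>t. X t a - S / card V) \<longlongrightarrow> 0) F" by (rule Lim_transform_eventually)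
  then show ?thesis by (simp add: LIM_zero_iff)
qed

section \<open>Bounded Lipschitz functions\<close>

definition lipschitz_bounded_on :: "'a::metric_space set \<Rightarrow> ('a \<Rightarrow> real) \<Rightarrow> bool" where
  "lipschitz_bounded_on U f \<longleftrightarrow> (\<exists>C. C-lipschitz_on U f) \<and> (\<exists>B. \<forall>x\<in>U. \<bar>f x\<bar> \<le> B)"

lemma lipschitz_bounded_onI:
  "C-lipschitz_on U f \<Longrightarrow> (\<And>x. x \<in> U \<Longrightarrow> \<bar>f x\<bar> \<le> B) \<Longrightarrow> lipschitz_bounded_on U f"
  unfolding lipschitz_bounded_on_def by blast

lemma lipschitz_bounded_onE:
  assumes "lipschitz_bounded_on U f"
  obtains C B where "C-lipschitz_on U f" "B \<ge> 0" "\<And>x. x \<in> U \<Longrightarrow> \<bar>f x\<bar> \<le> B"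
proof -
  obtain C B where "C-lipschitz_on U f" "\<And>x. x \<in> U \<Longrightarrow> \<bar>f x\<bar> \<le> B"
    using assms unfolding lipschitz_bounded_on_def by blast
  then show ?thesis by (intro that[of C "\<bar>B\<bar>"]) force+
qed

lemma lipschitz_bounded_on_const: "lipschitz_bounded_on U (\<lambda>x. c)"
  unfolding lipschitz_bounded_on_def by (auto intro: lipschitz_on_constant)

lemma lipschitz_bounded_on_add:
  assumes "lipschitz_bounded_on U f" "lipschitz_bounded_on U g"
  shows "lipschitz_bounded_on U (\<lambda>x. f x + g x)"
proof -
  obtain C A D B where C: "C-lipschitz_on U f" and A: "\<And>x. x \<in> U \<Longrightarrow> \<bar>f x\<bar> \<le> A"
    and D: "D-lipschitz_on U g" and B: "\<And>x. x \<in> U \<Longrightarrow> \<bar>g x\<bar> \<le> B"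
    using assms by (metis lipschitz_bounded_onE)
  have "\<bar>f x + g x\<bar> \<le> A + B" if "x \<in> U" for x
    using abs_triangle_ineq[of "f x" "g x"] A[OF that] B[OF that] by linarith
  with lipschitz_on_add[OF C D] show ?thesis by (rule lipschitz_bounded_onI)
qed

lemma lipschitz_bounded_on_minus:
  "lipschitz_bounded_on U f \<Longrightarrow> lipschitz_bounded_on U (\<lambda>x. - f x)"
  unfolding lipschitz_bounded_on_def by simp

lemma lipschitz_bounded_on_diff:
  "lipschitz_bounded_on U f \<Longrightarrow> lipschitz_bounded_on U g \<Longrightarrow> lipschitz_bounded_on U (\<lambda>x. f x - g x)"
  using lipschitz_bounded_on_add[of U f "\<lambda>x. - g x"] lipschitz_bounded_on_minus[of U g] by simp

lemma lipschitz_bounded_on_mult: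
  assumes "lipschitz_bounded_on U f" "lipschitz_bounded_on U g"
  shows "lipschitz_bounded_on U (\<lambda>x. f x * g x)"
proof -
  obtain C A where C: "C-lipschitz_on U f" and A: "A \<ge> 0" "\<And>x. x \<in> U \<Longrightarrow> \<bar>f x\<bar> \<le> A"
    using assms(1) by (metis lipschitz_bounded_onE)
  obtain D B where D: "D-lipschitz_on U g" and B: "B \<ge> 0" "\<And>x. x \<in> U \<Longrightarrow> \<bar>g x\<bar> \<le> B"
    using assms(2) by (metis lipschitz_bounded_onE)
  have "(C * B + A * D)-lipschitz_on U (\<lambda>x. f x * g x)"
  proof (rule lipschitz_onI)
    fix x y assume xy: "x \<in> U" "y \<in> U"
    have "\<bar>f x * g x - f y * g y\<bar> \<le> \<bar>f x - f y\<bar> * \<bar>g x\<bar> + \<bar>f y\<bar> * \<bar>g x - g y\<bar>"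
    proof -
      have "f x * g x - f y * g y = (f x - f y) * g x + f y * (g x - g y)"
        by (simp add: algebra_simps)
      then show ?thesis by (metis abs_mult abs_triangle_ineq)
    qed
    also have "\<dots> \<le> (C * dist x y) * B + A * (D * dist x y)"
      using lipschitz_onD[OF C xy] lipschitz_onD[OF D xy] A B xy
      by (intro add_mono mult_mono) (auto simp: dist_real_def)
    finally show "dist (f x * g x) (f y * g y) \<le> (C * B + A * D) * dist x y"
      by (simp add: dist_real_def algebra_simps)
  qed (use A B lipschitz_on_nonneg[OF C] lipschitz_on_nonneg[OF D] in simp)
  moreover have "\<bar>f x * g x\<bar> \<le> A * B" if "x \<in> U" for x
    unfolding abs_mult using A B that by (intro mult_mono) auto
  ultimately show ?thesis by (rule lipschitz_bounded_onI)
qed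

lemma lipschitz_bounded_on_sum:
  "(\<And>i. i \<in> I \<Longrightarrow> lipschitz_bounded_on U (f i)) \<Longrightarrow> lipschitz_bounded_on U (\<lambda>x. \<Sum>i\<in>I. f i x)"
proof (induction I rule: infinite_finite_induct)
  case (insert i I)
  then show ?case by (simp add: lipschitz_bounded_on_add)
qed (simp_all add: lipschitz_bounded_on_const)

lemma lipschitz_bounded_on_compose:
  assumes f: "lipschitz_bounded_on U f" and g: "\<And>R. \<exists>K. K-lipschitz_on {-R..R} g"
  shows "lipschitz_bounded_on U (\<lambda>x. g (f x))"
proof -
  obtain C B where C: "C-lipschitz_on U f" and B: "\<And>x. x \<in> U \<Longrightarrow> \<bar>f x\<bar> \<le> B"
    using f by (metis lipschitz_bounded_onE)
  obtain K where K: "K-lipschitz_on {-B..B} g" using g by blast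
  have image: "f ` U \<subseteq> {-B..B}" using B by (force simp: abs_le_iff)
  have "\<bar>g (f x)\<bar> \<le> \<bar>g 0\<bar> + K * B" if "x \<in> U" for x
  proof -
    have "0 \<in> {-B..B}" "f x \<in> {-B..B}" using B[OF that] by auto
    then have "\<bar>g (f x) - g 0\<bar> \<le> K * \<bar>f x\<bar>"
      using lipschitz_onD[OF K, of "f x" 0] by (simp add: dist_real_def)
    also have "\<dots> \<le> K * B" using B[OF that] lipschitz_on_nonneg[OF K] by (rule mult_left_mono)
    finally show ?thesis by linarith
  qed
  with lipschitz_on_compose2[OF C lipschitz_on_subset[OF K image]] show ?thesis
    by (rule lipschitz_bounded_onI)
qed

section \<open>Laplacian of a weighted graph\<close>

lemma mult_mat_vec_solvable_if_injective:
  fixes A :: "real mat"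
  assumes A: "A \<in> carrier_mat n n" and inj: "\<And>v. v \<in> carrier_vec n \<Longrightarrow> A *\<^sub>v v = 0\<^sub>v n \<Longrightarrow> v = 0\<^sub>v n"
    and b: "b \<in> carrier_vec n"
  obtains v where "v \<in> carrier_vec n" "A *\<^sub>v v = b"
proof -
  have "det A \<noteq> 0" using det_0_iff_vec_prod_zero[OF A] inj by blast
  from det_non_zero_imp_unit[OF A this, of "()"]
  obtain B where B: "B \<in> carrier_mat n n" "A * B = 1\<^sub>m n"
    unfolding Units_def ring_mat_def by auto
  have "A *\<^sub>v (B *\<^sub>v b) = b" using B b by (simp add: assoc_mult_mat_vec[symmetric, OF A B(1) b])
  with B b show ?thesis by (intro that[of "B *\<^sub>v b"]) auto
qed

lemma finite_linear_system_solvable: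
  fixes V :: "'a set" and c :: "'a \<Rightarrow> 'a \<Rightarrow> real" and r :: "'a \<Rightarrow> real"
  assumes "finite V"
    and inj: "\<And>x. \<forall>a\<in>V. (\<Sum>b\<in>V. c a b * x b) = 0 \<Longrightarrow> \<forall>a\<in>V. x a = 0"
  shows "\<exists>x. \<forall>a\<in>V. (\<Sum>b\<in>V. c a b * x b) = r a"
proof -
  define n where "n = card V"
  obtain h where h: "bij_betw h {0..<n} V"
    using ex_bij_betw_nat_finite[OF \<open>finite V\<close>] unfolding n_def by blast
  define idx where "idx = the_inv_into {0..<n} h"
  have idx: "idx a < n" "h (idx a) = a" if "a \<in> V" for a
    using h that unfolding idx_def by (auto simp: bij_betw_def f_the_inv_into_f the_inv_into_f_f)
  have idx_h: "idx (h j) = j" "h j \<in> V" if "j < n" for j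
    using h that unfolding idx_def by (auto simp: bij_betw_def the_inv_into_f_f)
  define A where "A = mat n n (\<lambda>(i, j). c (h i) (h j))"
  have A: "A \<in> carrier_mat n n" by (simp add: A_def)
  \<comment> \<open>a coordinate vector \<open>v\<close> represents the function \<open>\<lambda>a. v $ idx a\<close> on \<open>V\<close>\<close>
  have A_mult: "(A *\<^sub>v v) $ idx a = (\<Sum>b\<in>V. c a b * v $ idx b)" if "a \<in> V" "v \<in> carrier_vec n" for a v
  proof -
    have "(A *\<^sub>v v) $ idx a = (\<Sum>j\<in>{0..<n}. c a (h j) * v $ j)"
      using that idx by (simp add: A_def scalar_prod_def)
    also have "\<dots> = (\<Sum>j\<in>{0..<n}. c a (h j) * v $ idx (h j))"
      by (intro sum.cong) (auto simp: idx_h)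
    also have "\<dots> = (\<Sum>b\<in>V. c a b * v $ idx b)"
      using sum.reindex_bij_betw[OF h, of "\<lambda>b. c a b * v $ idx b"] .
    finally show ?thesis .
  qed
  have injective: "v = 0\<^sub>v n" if v: "v \<in> carrier_vec n" "A *\<^sub>v v = 0\<^sub>v n" for v
  proof -
    have "\<forall>a\<in>V. (\<Sum>b\<in>V. c a b * v $ idx b) = 0"
      using A_mult[OF _ v(1)] v(2) idx(1) by simp
    then have zero: "\<forall>a\<in>V. v $ idx a = 0" by (rule inj)
    have "v $ j = 0" if "j < n" for j
      using zero idx_h[OF that] by auto
    then show "v = 0\<^sub>v n" using v(1) by (intro eq_vecI) auto
  qed
  obtain v where v: "v \<in> carrier_vec n" "A *\<^sub>v v = vec n (\<lambda>i. r (h i))"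
    using mult_mat_vec_solvable_if_injective[OF A injective vec_carrier] by blast
  have "(\<Sum>b\<in>V. c a b * v $ idx b) = r a" if "a \<in> V" for a
    using A_mult[OF that v(1)] v(2) idx[OF that] by simp
  then show ?thesis by (intro exI[of _ "\<lambda>b. v $ idx b"] ballI)
qed

lemma rtrancl_induct_edges:
  assumes "(a, b) \<in> {(x, y). x \<in> V \<and> y \<in> V \<and> E x y}\<^sup>*"
    and "\<And>x. P x x" and "\<And>x y z. P x y \<Longrightarrow> y \<in> V \<Longrightarrow> z \<in> V \<Longrightarrow> E y z \<Longrightarrow> P x z"
  shows "P a b"
  using assms(1) by (induction rule: rtrancl_induct) (use assms(2,3) in auto)

locale weighted_graph =
  fixes V :: "'a set" and W :: "'a \<Rightarrow> 'a \<Rightarrow> real"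
  assumes finite_V: "finite V" and V_nonempty: "V \<noteq> {}"
    and W_sym: "\<And>a b. a \<in> V \<Longrightarrow> b \<in> V \<Longrightarrow> W a b = W b a"
    and W_nonneg: "\<And>a b. a \<in> V \<Longrightarrow> b \<in> V \<Longrightarrow> 0 \<le> W a b"
    and connected: "\<And>a b. a \<in> V \<Longrightarrow> b \<in> V \<Longrightarrow> (a, b) \<in> {(x, y). x \<in> V \<and> y \<in> V \<and> 0 < W x y}\<^sup>*"
begin

definition laplacian :: "('a \<Rightarrow> real) \<Rightarrow> 'a \<Rightarrow> real" where
  "laplacian x a = (\<Sum>b\<in>V. W a b * (x a - x b))"

lemma laplacian_eq: "laplacian x a = (\<Sum>b\<in>V. W a b) * x a - (\<Sum>b\<in>V. W a b * x b)"
  unfolding laplacian_def right_diff_distrib sum_subtractf sum_distrib_right ..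

lemma laplacian_add: "laplacian (\<lambda>v. x v + y v) a = laplacian x a + laplacian y a"
  unfolding laplacian_def by (simp add: sum.distrib[symmetric] algebra_simps)

lemma laplacian_diff: "laplacian (\<lambda>v. x v - y v) a = laplacian x a - laplacian y a"
  unfolding laplacian_def by (simp add: sum_subtractf[symmetric] algebra_simps)

lemma laplacian_const [simp]: "laplacian (\<lambda>v. c) a = 0"
  unfolding laplacian_def by simp

lemma sum_laplacian: "(\<Sum>a\<in>V. laplacian x a) = 0"
proof -
  have "(\<Sum>a\<in>V. laplacian x a) = (\<Sum>a\<in>V. \<Sum>b\<in>V. W b a * (x b - x a))"
    unfolding laplacian_def by (rule sum.swap)
  also have "\<dots> = - (\<Sum>a\<in>V. laplacian x a)"
    unfolding laplacian_def sum_negf[symmetric] by (intro sum.cong refl) (simp add: W_sym algebra_simps)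
  finally show ?thesis by simp
qed

lemma sum_mult_laplacian:
  "(\<Sum>a\<in>V. x a * laplacian y a) = (\<Sum>a\<in>V. \<Sum>b\<in>V. W a b * x a * (y a - y b))"
  unfolding laplacian_def by (simp add: sum_distrib_left algebra_simps)

lemma laplacian_symmetric: "(\<Sum>a\<in>V. x a * laplacian y a) = (\<Sum>a\<in>V. y a * laplacian x a)"
proof -
  have "(\<Sum>a\<in>V. \<Sum>b\<in>V. W a b * x a * y b) = (\<Sum>a\<in>V. \<Sum>b\<in>V. W b a * x b * y a)"
    by (rule sum.swap)
  also have "\<dots> = (\<Sum>a\<in>V. \<Sum>b\<in>V. W a b * y a * x b)"
    by (intro sum.cong refl) (simp add: W_sym)
  finally show ?thesis
    unfolding sum_mult_laplacian by (simp add: algebra_simps sum_subtractf)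
qed

lemma laplacian_quadratic_form:
  "(\<Sum>a\<in>V. x a * laplacian x a) = (\<Sum>a\<in>V. \<Sum>b\<in>V. W a b * (x a - x b)^2) / 2"
proof -
  have "(\<Sum>a\<in>V. \<Sum>b\<in>V. W a b * x a * (x a - x b)) = (\<Sum>a\<in>V. \<Sum>b\<in>V. W b a * x b * (x b - x a))"
    by (rule sum.swap)
  also have "\<dots> = (\<Sum>a\<in>V. \<Sum>b\<in>V. W a b * (x a - x b)^2 - W a b * x a * (x a - x b))"
    by (intro sum.cong refl) (simp add: W_sym power2_eq_square algebra_simps)
  finally show ?thesis
    unfolding sum_mult_laplacian sum_subtractf by simp
qed

lemma laplacian_quadratic_nonneg: "0 \<le> (\<Sum>a\<in>V. x a * laplacian x a)"
  unfolding laplacian_quadratic_form by (intro divide_nonneg_pos sum_nonneg) (auto simp: W_nonneg)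

lemma edge_le_laplacian_quadratic:
  assumes "a \<in> V" "b \<in> V"
  shows "W a b * (x a - x b)^2 \<le> 2 * (\<Sum>a\<in>V. x a * laplacian x a)"
proof -
  have "W a b * (x a - x b)^2 \<le> (\<Sum>b\<in>V. W a b * (x a - x b)^2)"
    using assms finite_V W_nonneg by (intro member_le_sum) auto
  also have "\<dots> \<le> (\<Sum>a\<in>V. \<Sum>b\<in>V. W a b * (x a - x b)^2)"
    using assms finite_V W_nonneg by (intro member_le_sum sum_nonneg) auto
  finally show ?thesis unfolding laplacian_quadratic_form by simp
qed

lemma connected_induct:
  assumes "a \<in> V" "b \<in> V" "\<And>x. P x x" "\<And>x y z. P x y \<Longrightarrow> y \<in> V \<Longrightarrow> z \<in> V \<Longrightarrow> 0 < W y z \<Longrightarrow> P x z"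
  shows "P a b"
  using rtrancl_induct_edges[OF connected[OF assms(1,2)]] assms(3,4) by blast

lemma const_if_laplacian_quadratic_eq_0:
  assumes "(\<Sum>a\<in>V. x a * laplacian x a) = 0" "a \<in> V" "b \<in> V"
  shows "x a = x b"
  using assms(2,3)
proof (rule connected_induct)
  fix u y z assume "x u = x y" "y \<in> V" "z \<in> V" "0 < W y z"
  moreover have "W y z * (x y - x z)^2 \<le> 0"
    using edge_le_laplacian_quadratic[OF \<open>y \<in> V\<close> \<open>z \<in> V\<close>, of x] assms(1) by simp
  ultimately show "x u = x z" by (simp add: mult_le_0_iff)
qed simp

lemma laplacian_solvable:
  assumes "(\<Sum>a\<in>V. r a) = 0"
  shows "\<exists>x. \<forall>a\<in>V. laplacian x a = r a"
proof -
  \<comment> \<open>the rank-one term \<open>\<Sum>x\<close> fills the one-dimensional kernel of the Laplacian\<close>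
  define c where "c a b = (if a = b then (\<Sum>d\<in>V. W a d) else 0) - W a b + 1" for a b
  have c: "(\<Sum>b\<in>V. c a b * x b) = laplacian x a + (\<Sum>b\<in>V. x b)" if "a \<in> V" for a x
  proof -
    have "(\<Sum>b\<in>V. c a b * x b) = (\<Sum>b\<in>V. (if a = b then (\<Sum>d\<in>V. W a d) * x b else 0))
        - (\<Sum>b\<in>V. W a b * x b) + (\<Sum>b\<in>V. x b)"
      unfolding c_def sum_subtractf[symmetric] sum.distrib[symmetric]
      by (rule sum.cong) (auto simp: algebra_simps)
    with that finite_V show ?thesis by (simp add: laplacian_eq)
  qed
  have n: "real (card V) > 0" using finite_V V_nonempty by (simp add: card_gt_0_iff)
  have sum_0: "(\<Sum>b\<in>V. x b) = 0"
    if "\<forall>a\<in>V. laplacian x a + (\<Sum>b\<in>V. x b) = r a" "(\<Sum>a\<in>V. r a) = 0" for r x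
  proof -
    have "(\<Sum>a\<in>V. laplacian x a + (\<Sum>b\<in>V. x b)) = 0" using that by simp
    then show ?thesis using n by (simp add: sum.distrib sum_laplacian)
  qed
  have "\<forall>a\<in>V. x a = 0" if "\<forall>a\<in>V. (\<Sum>b\<in>V. c a b * x b) = 0" for x
  proof -
    have "\<forall>a\<in>V. laplacian x a + (\<Sum>b\<in>V. x b) = 0" using that c by simp
    with sum_0[of x "\<lambda>_. 0"] have sum_x: "(\<Sum>b\<in>V. x b) = 0" and "\<forall>a\<in>V. laplacian x a = 0" by simp_all
    then have "(\<Sum>a\<in>V. x a * laplacian x a) = 0" by simp
    moreover obtain a0 where "a0 \<in> V" using V_nonempty by blast
    ultimately have const: "x a = x a0" if "a \<in> V" for a
      using const_if_laplacian_quadratic_eq_0 that by blast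
    then have "real (card V) * x a0 = 0" using sum_x by simp
    with const n show ?thesis by simp

  qed
  then obtain x where "\<forall>a\<in>V. (\<Sum>b\<in>V. c a b * x b) = r a"
    using finite_linear_system_solvable[OF finite_V] by blast
  with c sum_0[of x r] assms show ?thesis by auto
qed

lemma laplacian_bound:
  assumes "a \<in> V" and bound: "\<And>b. b \<in> V \<Longrightarrow> \<bar>x b\<bar> \<le> r"
  shows "\<bar>laplacian x a\<bar> \<le> 2 * r * (\<Sum>b\<in>V. W a b)"
proof -
  have "\<bar>laplacian x a\<bar> \<le> (\<Sum>b\<in>V. \<bar>W a b * (x a - x b)\<bar>)" unfolding laplacian_def by (rule sum_abs)
  also have "\<dots> \<le> (\<Sum>b\<in>V. W a b * (2 * r))"
  proof (intro sum_mono)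
    fix b assume "b \<in> V"
    then have "\<bar>x a - x b\<bar> \<le> 2 * r" using bound[of a] bound[of b] \<open>a \<in> V\<close> by linarith
    then show "\<bar>W a b * (x a - x b)\<bar> \<le> W a b * (2 * r)"
      using W_nonneg[OF \<open>a \<in> V\<close> \<open>b \<in> V\<close>] by (simp add: abs_mult mult_left_mono)
  qed
  finally show ?thesis by (simp add: sum_distrib_right mult.commute)
qed

lemma has_real_derivative_laplacian:
  assumes "\<And>v. v \<in> V \<Longrightarrow> ((\<lambda>s. X s v) has_real_derivative X' v) (at t within S)" "a \<in> V"
  shows "((\<lambda>s. laplacian (X s) a) has_real_derivative laplacian X' a) (at t within S)"
  unfolding laplacian_def using assms by (intro DERIV_sum DERIV_cmult DERIV_diff) auto

lemma tendsto_laplacian: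
  assumes "\<And>v. v \<in> V \<Longrightarrow> ((\<lambda>t. X t v) \<longlongrightarrow> x v) F" "a \<in> V"
  shows "((\<lambda>t. laplacian (X t) a) \<longlongrightarrow> laplacian x a) F"
  unfolding laplacian_def using assms by (intro tendsto_sum tendsto_mult tendsto_diff tendsto_const) auto

lemma lipschitz_bounded_on_laplacian:
  assumes "\<And>v. v \<in> V \<Longrightarrow> lipschitz_bounded_on U (\<lambda>t. X t v)" "a \<in> V"
  shows "lipschitz_bounded_on U (\<lambda>t. laplacian (X t) a)"
  unfolding laplacian_def using assms
  by (intro lipschitz_bounded_on_sum lipschitz_bounded_on_mult lipschitz_bounded_on_const
      lipschitz_bounded_on_diff) auto

lemma differences_tendsto_0_if_laplacian_quadratic_tendsto_0:
  fixes X :: "'b \<Rightarrow> 'a \<Rightarrow> real"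
  assumes lim: "((\<lambda>t. \<Sum>a\<in>V. X t a * laplacian (X t) a) \<longlongrightarrow> 0) F" and "a \<in> V" "b \<in> V"
  shows "((\<lambda>t. X t a - X t b) \<longlongrightarrow> 0) F"
  using assms(2,3)
proof (rule connected_induct)
  fix u y z assume IH: "((\<lambda>t. X t u - X t y) \<longlongrightarrow> 0) F" and "y \<in> V" "z \<in> V" "0 < W y z"
  have "((\<lambda>t. (X t y - X t z)^2) \<longlongrightarrow> 0) F"
  proof (rule Lim_null_comparison)
    show "((\<lambda>t. 2 / W y z * (\<Sum>a\<in>V. X t a * laplacian (X t) a)) \<longlongrightarrow> 0) F"
      by (rule tendsto_mult_right_zero[OF lim])
    show "eventually (\<lambda>t. norm ((X t y - X t z)^2) \<le> 2 / W y z * (\<Sum>a\<in>V. X t a * laplacian (X t) a)) F"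
      using edge_le_laplacian_quadratic[OF \<open>y \<in> V\<close> \<open>z \<in> V\<close>] \<open>0 < W y z\<close>
      by (intro always_eventually) (simp add: field_simps)
  qed
  then have "((\<lambda>t. (X t u - X t y) + (X t y - X t z)) \<longlongrightarrow> 0 + 0) F"
    by (intro tendsto_add IH) simp
  then show "((\<lambda>t. X t u - X t z) \<longlongrightarrow> 0) F" by simp
qed simp

lemma laplacian_tendsto_0_if_differences_tendsto_0:
  assumes "\<And>a b. a \<in> V \<Longrightarrow> b \<in> V \<Longrightarrow> ((\<lambda>t. X t a - X t b) \<longlongrightarrow> 0) F" "a \<in> V"
  shows "((\<lambda>t. laplacian (X t) a) \<longlongrightarrow> 0) F"
  unfolding laplacian_def using assms by (intro tendsto_null_sum tendsto_mult_right_zero) auto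

end

section \<open>The saddle-point flow\<close>

lemma monotone_lipschitz_cocoercive:
  fixes g :: "real \<Rightarrow> real"
  assumes mono: "\<And>x y. x \<le> y \<Longrightarrow> g x \<le> g y" and lip: "K-lipschitz_on S g"
    and "x \<in> S" "y \<in> S"
  shows "(g x - g y)^2 \<le> K * ((x - y) * (g x - g y))"
proof -
  have same_sign: "0 \<le> (x - y) * (g x - g y)"
    using mono[of x y] mono[of y x] by (cases "x \<le> y") (auto intro: mult_nonpos_nonpos)
  have "(g x - g y)^2 = \<bar>g x - g y\<bar> * \<bar>g x - g y\<bar>" by (simp add: power2_eq_square)
  also have "\<dots> \<le> (K * \<bar>x - y\<bar>) * \<bar>g x - g y\<bar>"
    using lipschitz_onD[OF lip assms(3,4)] by (intro mult_right_mono) (auto simp: dist_real_def)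
  also have "\<dots> = K * ((x - y) * (g x - g y))"
    using same_sign by (simp add: abs_mult[symmetric])
  finally show ?thesis .
qed

locale saddle_flow = weighted_graph V W for V :: "'a set" and W +
  fixes g :: "'a \<Rightarrow> real \<Rightarrow> real" and Y \<Lambda> :: "real \<Rightarrow> 'a \<Rightarrow> real" and x_opt :: real
  assumes g_mono: "\<And>v x y. v \<in> V \<Longrightarrow> x \<le> y \<Longrightarrow> g v x \<le> g v y"
    and g_lipschitz: "\<And>v R. v \<in> V \<Longrightarrow> \<exists>K. K-lipschitz_on {-R..R} (g v)"
    and x_opt: "(\<Sum>v\<in>V. g v x_opt) = 0"
    and Y_deriv: "\<And>t v. t \<ge> 0 \<Longrightarrow> v \<in> V \<Longrightarrow> ((\<lambda>s. Y s v) has_real_derivative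
          - g v (Y t v) - laplacian (Y t) v - laplacian (\<Lambda> t) v) (at t within {0..})"
    and \<Lambda>_deriv: "\<And>t v. t \<ge> 0 \<Longrightarrow> v \<in> V \<Longrightarrow>
          ((\<lambda>s. \<Lambda> s v) has_real_derivative laplacian (Y t) v) (at t within {0..})"
begin

definition is_equilibrium :: "real \<Rightarrow> ('a \<Rightarrow> real) \<Rightarrow> bool" where
  "is_equilibrium y L \<longleftrightarrow> (\<forall>v\<in>V. g v y + laplacian L v = 0)"

definition lyapunov :: "real \<Rightarrow> ('a \<Rightarrow> real) \<Rightarrow> real \<Rightarrow> real" where
  "lyapunov y L t = (\<Sum>v\<in>V. ((Y t v - y)^2 + (\<Lambda> t v - L v)^2) / 2)"

definition primal_dissipation :: "real \<Rightarrow> real \<Rightarrow> real" where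
  "primal_dissipation y t = (\<Sum>v\<in>V. (Y t v - y) * (g v (Y t v) - g v y))"

definition consensus_dissipation :: "real \<Rightarrow> real" where
  "consensus_dissipation t = (\<Sum>v\<in>V. Y t v * laplacian (Y t) v)"

lemma g_continuous: "v \<in> V \<Longrightarrow> isCont (g v) x"
proof -
  assume "v \<in> V"
  then obtain K where "K-lipschitz_on {-(\<bar>x\<bar> + 1)..\<bar>x\<bar> + 1} (g v)" using g_lipschitz by blast
  then have "continuous_on {-(\<bar>x\<bar> + 1)..\<bar>x\<bar> + 1} (g v)" by (rule lipschitz_on_continuous_on)
  then show "isCont (g v) x" by (rule continuous_on_interior) auto
qed

lemma monotone_product_nonneg: "v \<in> V \<Longrightarrow> 0 \<le> (a - b) * (g v a - g v b)"
  using g_mono[of v a b] g_mono[of v b a] by (cases "a \<le> b") (auto intro: mult_nonpos_nonpos)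

lemma primal_dissipation_nonneg: "0 \<le> primal_dissipation y t"
  unfolding primal_dissipation_def by (intro sum_nonneg monotone_product_nonneg)

lemma consensus_dissipation_nonneg: "0 \<le> consensus_dissipation t"
  unfolding consensus_dissipation_def by (rule laplacian_quadratic_nonneg)

lemma lyapunov_nonneg: "0 \<le> lyapunov y L t"
  unfolding lyapunov_def by (intro sum_nonneg) auto

lemma lyapunov_component_le:
  "v \<in> V \<Longrightarrow> (Y t v - y)^2 + (\<Lambda> t v - L v)^2 \<le> 2 * lyapunov y L t"
  unfolding lyapunov_def using member_le_sum[of v V "\<lambda>v. ((Y t v - y)^2 + (\<Lambda> t v - L v)^2) / 2"]
  by (simp add: finite_V)

lemma has_real_derivative_lyapunov:
  assumes "is_equilibrium y L" "t \<ge> 0"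
  shows "(lyapunov y L has_real_derivative - (primal_dissipation y t + consensus_dissipation t))
    (at t within {0..})"
proof -
  define D where "D v = (Y t v - y) * (- g v (Y t v) - laplacian (Y t) v - laplacian (\<Lambda> t) v)
    + (\<Lambda> t v - L v) * laplacian (Y t) v" for v
  have "((\<lambda>s. ((Y s v - y)^2 + (\<Lambda> s v - L v)^2) / 2) has_real_derivative D v) (at t within {0..})"
    if "v \<in> V" for v
    unfolding D_def
    by (rule derivative_eq_intros Y_deriv[OF \<open>t \<ge> 0\<close> that] \<Lambda>_deriv[OF \<open>t \<ge> 0\<close> that] refl | simp)+
  then have "(lyapunov y L has_real_derivative (\<Sum>v\<in>V. D v)) (at t within {0..})"
    unfolding lyapunov_def[abs_def] by (rule DERIV_sum)
  moreover
  \<comment> \<open>the equilibrium condition turns the multiplier term into a Laplacian of the deviation,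
    and the symmetry of the Laplacian cancels it against the multiplier update\<close>
  have "(\<Sum>v\<in>V. D v) = - (primal_dissipation y t + consensus_dissipation t)"
  proof -
    have eq: "laplacian (\<Lambda> t) v = laplacian (\<lambda>u. \<Lambda> t u - L u) v - g v y" if "v \<in> V" for v
      using assms(1) that unfolding is_equilibrium_def laplacian_diff by force
    have "(\<Sum>v\<in>V. (Y t v - y) * laplacian (\<lambda>u. \<Lambda> t u - L u) v)
        = (\<Sum>v\<in>V. (\<Lambda> t v - L v) * laplacian (\<lambda>u. Y t u - y) v)"
      by (rule laplacian_symmetric)
    also have "\<dots> = (\<Sum>v\<in>V. (\<Lambda> t v - L v) * laplacian (Y t) v)"
      by (simp add: laplacian_diff)
    moreover have "(\<Sum>v\<in>V. (Y t v - y) * laplacian (Y t) v) = consensus_dissipation t"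
      unfolding consensus_dissipation_def
      by (simp add: left_diff_distrib sum_subtractf sum_distrib_left[symmetric] sum_laplacian)
    moreover have "D v = - ((Y t v - y) * (g v (Y t v) - g v y))
        - (Y t v - y) * laplacian (\<lambda>u. \<Lambda> t u - L u) v - (Y t v - y) * laplacian (Y t) v
        + (\<Lambda> t v - L v) * laplacian (Y t) v" if "v \<in> V" for v
      unfolding D_def eq[OF that] by (simp add: algebra_simps)
    ultimately show ?thesis
      unfolding primal_dissipation_def by (simp add: sum.distrib sum_subtractf sum_negf)
  qed
  ultimately show ?thesis by simp
qed

lemma lyapunov_antimono:
  assumes "is_equilibrium y L" "0 \<le> s" "s \<le> t"
  shows "lyapunov y L t \<le> lyapunov y L s"
proof (rule antimono_if_deriv_nonpos[OF has_real_derivative_lyapunov[OF assms(1)] _ assms(2,3)])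
  fix u :: real
  show "- (primal_dissipation y u + consensus_dissipation u) \<le> 0"
    using primal_dissipation_nonneg[of y u] consensus_dissipation_nonneg[of u] by linarith
qed

lemma sum_gradient_eq_0_if_equilibrium:
  assumes "is_equilibrium y L"
  shows "(\<Sum>v\<in>V. g v y) = 0"
proof -
  have "(\<Sum>v\<in>V. g v y) = (\<Sum>v\<in>V. g v y + laplacian L v)"
    by (simp add: sum.distrib sum_laplacian)
  also have "\<dots> = 0" using assms by (simp add: is_equilibrium_def)
  finally show ?thesis .
qed

lemma equilibrium_exists: "\<exists>L. is_equilibrium x_opt L"
proof -
  have "(\<Sum>v\<in>V. - g v x_opt) = 0" using x_opt by (simp add: sum_negf)
  then obtain L where "\<forall>v\<in>V. laplacian L v = - g v x_opt" using laplacian_solvable by blast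
  then have "is_equilibrium x_opt L" by (simp add: is_equilibrium_def)
  then show ?thesis by blast
qed

lemma trajectory_bounded:
  obtains R where "\<bar>x_opt\<bar> \<le> R" "\<And>t v. t \<ge> 0 \<Longrightarrow> v \<in> V \<Longrightarrow> \<bar>Y t v\<bar> \<le> R \<and> \<bar>\<Lambda> t v\<bar> \<le> R"
proof -
  obtain L where L: "is_equilibrium x_opt L" using equilibrium_exists ..
  define R where "R = \<bar>x_opt\<bar> + (\<Sum>v\<in>V. \<bar>L v\<bar>) + sqrt (2 * lyapunov x_opt L 0)"
  have "\<bar>Y t v\<bar> \<le> R \<and> \<bar>\<Lambda> t v\<bar> \<le> R" if "t \<ge> 0" "v \<in> V" for t v
  proof -
    have "(Y t v - x_opt)^2 + (\<Lambda> t v - L v)^2 \<le> 2 * lyapunov x_opt L 0"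
      using lyapunov_component_le[OF that(2)] lyapunov_antimono[OF L order_refl that(1)]
      by (meson mult_left_mono order_trans zero_le_numeral)
    then have "\<bar>Y t v - x_opt\<bar>\<^sup>2 \<le> 2 * lyapunov x_opt L 0" "\<bar>\<Lambda> t v - L v\<bar>\<^sup>2 \<le> 2 * lyapunov x_opt L 0"
      using zero_le_power2[of "Y t v - x_opt"] zero_le_power2[of "\<Lambda> t v - L v"]
      by (simp_all only: power2_abs)
    then have "\<bar>Y t v - x_opt\<bar> \<le> sqrt (2 * lyapunov x_opt L 0)"
      and "\<bar>\<Lambda> t v - L v\<bar> \<le> sqrt (2 * lyapunov x_opt L 0)"
      by (auto intro: real_le_rsqrt)
    moreover have "\<bar>L v\<bar> \<le> (\<Sum>v\<in>V. \<bar>L v\<bar>)"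
      using that(2) finite_V by (intro member_le_sum) auto
    ultimately show ?thesis
      unfolding R_def by linarith
  qed
  moreover have "\<bar>x_opt\<bar> \<le> R"
    unfolding R_def using lyapunov_nonneg
    by (simp add: add_nonneg_nonneg sum_nonneg)
  ultimately show ?thesis using that by blast
qed


lemma trajectory_lipschitz_bounded:
  assumes "v \<in> V"
  shows "lipschitz_bounded_on {0..} (\<lambda>t. Y t v)" "lipschitz_bounded_on {0..} (\<lambda>t. \<Lambda> t v)"
proof -
  obtain R where R: "\<bar>x_opt\<bar> \<le> R" "\<And>t v. t \<ge> 0 \<Longrightarrow> v \<in> V \<Longrightarrow> \<bar>Y t v\<bar> \<le> R \<and> \<bar>\<Lambda> t v\<bar> \<le> R"
    using trajectory_bounded by blast
  define deg where "deg = (\<Sum>b\<in>V. W v b)"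
  have laplacian_bounds: "\<bar>laplacian (Y t) v\<bar> \<le> 2 * R * deg" "\<bar>laplacian (\<Lambda> t) v\<bar> \<le> 2 * R * deg"
    if "t \<ge> 0" for t
    using laplacian_bound[OF assms, of "Y t" R] laplacian_bound[OF assms, of "\<Lambda> t" R] R(2) that
    unfolding deg_def by auto
  obtain K where K: "K-lipschitz_on {-R..R} (g v)" using g_lipschitz[OF assms] by blast
  have g_bound: "\<bar>g v x\<bar> \<le> \<bar>g v 0\<bar> + K * R" if "\<bar>x\<bar> \<le> R" for x
  proof -
    have "\<bar>g v x - g v 0\<bar> \<le> K * \<bar>x\<bar>"
      using lipschitz_onD[OF K, of x 0] that by (simp add: dist_real_def abs_le_iff)
    also have "\<dots> \<le> K * R" using that lipschitz_on_nonneg[OF K] by (rule mult_left_mono)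
    finally show ?thesis by linarith
  qed
  define B where "B = \<bar>g v 0\<bar> + K * R + 4 * R * deg"
  have Y_lip: "B-lipschitz_on {0..} (\<lambda>t. Y t v)"
  proof (rule lipschitz_on_if_deriv_bounded[OF Y_deriv[OF _ assms] order_refl])
    fix t :: real assume "0 \<le> t"
    then show "\<bar>- g v (Y t v) - laplacian (Y t) v - laplacian (\<Lambda> t) v\<bar> \<le> B"
      using g_bound[of "Y t v"] laplacian_bounds R(2)[OF _ assms] unfolding B_def by force
  qed
  have "2 * R * deg \<le> B"
    using g_bound[of x_opt] R(1) laplacian_bounds[of 0] unfolding B_def by linarith
  have \<Lambda>_lip: "B-lipschitz_on {0..} (\<lambda>t. \<Lambda> t v)"
  proof (rule lipschitz_on_if_deriv_bounded[OF \<Lambda>_deriv[OF _ assms] order_refl])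
    fix t :: real assume "0 \<le> t"
    then show "\<bar>laplacian (Y t) v\<bar> \<le> B" using laplacian_bounds(1) \<open>2 * R * deg \<le> B\<close> by force
  qed
  show "lipschitz_bounded_on {0..} (\<lambda>t. Y t v)" "lipschitz_bounded_on {0..} (\<lambda>t. \<Lambda> t v)"
    using Y_lip \<Lambda>_lip R(2)[OF _ assms] by (auto intro: lipschitz_bounded_onI)
qed

lemma dissipation_tendsto_0:
  shows "(primal_dissipation x_opt \<longlongrightarrow> 0) at_top" and "(consensus_dissipation \<longlongrightarrow> 0) at_top"
proof -
  obtain L where L: "is_equilibrium x_opt L" using equilibrium_exists ..
  have Y_lipschitz: "lipschitz_bounded_on {0..} (\<lambda>t. Y t v)" if "v \<in> V" for v
    using trajectory_lipschitz_bounded[OF that] by simp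
  have gY_lipschitz: "lipschitz_bounded_on {0..} (\<lambda>t. g v (Y t v))" if "v \<in> V" for v
    using lipschitz_bounded_on_compose[OF Y_lipschitz[OF that] g_lipschitz[OF that]] .
  have "lipschitz_bounded_on {0..} (primal_dissipation x_opt)"
    unfolding primal_dissipation_def
    by (intro lipschitz_bounded_on_sum lipschitz_bounded_on_mult lipschitz_bounded_on_diff
        lipschitz_bounded_on_const Y_lipschitz gY_lipschitz)
  moreover have "lipschitz_bounded_on {0..} consensus_dissipation"
    unfolding consensus_dissipation_def
    by (intro lipschitz_bounded_on_sum lipschitz_bounded_on_mult lipschitz_bounded_on_laplacian Y_lipschitz)
  ultimately have "lipschitz_bounded_on {0..} (\<lambda>t. primal_dissipation x_opt t + consensus_dissipation t)"
    by (rule lipschitz_bounded_on_add)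
  then obtain K where K: "K-lipschitz_on {0..} (\<lambda>t. primal_dissipation x_opt t + consensus_dissipation t)"
    unfolding lipschitz_bounded_on_def by blast
  have total: "((\<lambda>t. primal_dissipation x_opt t + consensus_dissipation t) \<longlongrightarrow> 0) at_top"
  proof (rule barbalat[OF _ _ _ K])
    show "(lyapunov x_opt L has_real_derivative - (primal_dissipation x_opt t + consensus_dissipation t))
      (at t within {0..})" if "t \<ge> 0" for t
      by (rule has_real_derivative_lyapunov[OF L that])
  qed (simp_all add: add_nonneg_nonneg primal_dissipation_nonneg consensus_dissipation_nonneg
      lyapunov_nonneg)
  have primal_le: "norm (primal_dissipation x_opt t) \<le> primal_dissipation x_opt t + consensus_dissipation t"
    and consensus_le: "norm (consensus_dissipation t) \<le> primal_dissipation x_opt t + consensus_dissipation t"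
    for t using primal_dissipation_nonneg[of x_opt t] consensus_dissipation_nonneg[of t] by simp_all
  show "(primal_dissipation x_opt \<longlongrightarrow> 0) at_top"
    by (rule Lim_null_comparison[OF always_eventually[OF allI[OF primal_le]] total])
  show "(consensus_dissipation \<longlongrightarrow> 0) at_top"
    by (rule Lim_null_comparison[OF always_eventually[OF allI[OF consensus_le]] total])
qed

lemma gradient_tendsto:
  assumes "v \<in> V"
  shows "((\<lambda>t. g v (Y t v)) \<longlongrightarrow> g v x_opt) at_top"
proof -
  obtain R where R: "\<bar>x_opt\<bar> \<le> R" "\<And>t v. t \<ge> 0 \<Longrightarrow> v \<in> V \<Longrightarrow> \<bar>Y t v\<bar> \<le> R \<and> \<bar>\<Lambda> t v\<bar> \<le> R"
    using trajectory_bounded by blast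
  obtain K where K: "K-lipschitz_on {-R..R} (g v)" using g_lipschitz[OF assms] by blast
  \<comment> \<open>a monotone Lipschitz function is co-coercive, so its increments are controlled by
    the primal dissipation\<close>
  have "((\<lambda>t. (g v (Y t v) - g v x_opt)^2) \<longlongrightarrow> 0) at_top"
  proof (rule Lim_null_comparison)
    show "eventually (\<lambda>t. norm ((g v (Y t v) - g v x_opt)^2) \<le> K * primal_dissipation x_opt t) at_top"
      using eventually_ge_at_top[of 0]
    proof eventually_elim
      fix t :: real assume "t \<ge> 0"
      have "(g v (Y t v) - g v x_opt)^2 \<le> K * ((Y t v - x_opt) * (g v (Y t v) - g v x_opt))"
        using R(1) R(2)[OF \<open>t \<ge> 0\<close> assms] g_mono[OF assms]
        by (intro monotone_lipschitz_cocoercive[OF _ K]) (auto simp: abs_le_iff)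
      also have "\<dots> \<le> K * primal_dissipation x_opt t"
        unfolding primal_dissipation_def
        using lipschitz_on_nonneg[OF K] assms finite_V monotone_product_nonneg
        by (intro mult_left_mono member_le_sum) auto
      finally show "norm ((g v (Y t v) - g v x_opt)^2) \<le> K * primal_dissipation x_opt t" by simp
    qed
    show "((\<lambda>t. K * primal_dissipation x_opt t) \<longlongrightarrow> 0) at_top"
      by (rule tendsto_mult_right_zero[OF dissipation_tendsto_0(1)])
  qed
  then show ?thesis by (simp add: LIM_zero_iff)
qed

lemma consensus_tendsto:
  "a \<in> V \<Longrightarrow> b \<in> V \<Longrightarrow> ((\<lambda>t. Y t a - Y t b) \<longlongrightarrow> 0) at_top"
  using differences_tendsto_0_if_laplacian_quadratic_tendsto_0
    dissipation_tendsto_0(2)[unfolded consensus_dissipation_def[abs_def]] by blast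

lemma laplacian_trajectory_tendsto_0: "a \<in> V \<Longrightarrow> ((\<lambda>t. laplacian (Y t) a) \<longlongrightarrow> 0) at_top"
  by (rule laplacian_tendsto_0_if_differences_tendsto_0[OF consensus_tendsto])

lemma multiplier_residual_tendsto_0:
  assumes "a \<in> V"
  shows "((\<lambda>t. laplacian (\<Lambda> t) a + g a x_opt) \<longlongrightarrow> 0) at_top"
proof -
  obtain R where R: "\<And>t v. t \<ge> 0 \<Longrightarrow> v \<in> V \<Longrightarrow> \<bar>Y t v\<bar> \<le> R \<and> \<bar>\<Lambda> t v\<bar> \<le> R"
    using trajectory_bounded by metis
  \<comment> \<open>\<open>Y a\<close> stays bounded while drifting with the slowly varying residual\<close>
  have "((\<lambda>t. - (laplacian (\<Lambda> t) a + g a x_opt)) \<longlongrightarrow> 0) at_top"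
  proof (rule drift_tendsto_0_if_bounded)
    fix t :: real assume "t \<ge> 0"
    show "((\<lambda>t. Y t a) has_real_derivative - (laplacian (\<Lambda> t) a + g a x_opt)
        + (- (g a (Y t a) - g a x_opt) - laplacian (Y t) a)) (at t within {0..})"
      by (rule DERIV_cong[OF Y_deriv[OF \<open>t \<ge> 0\<close> assms]]) (simp add: algebra_simps)
    show "((\<lambda>t. - (laplacian (\<Lambda> t) a + g a x_opt)) has_real_derivative
        - laplacian (\<lambda>v. laplacian (Y t) v) a) (at t within {0..})"
      using has_real_derivative_laplacian[OF \<Lambda>_deriv[OF \<open>t \<ge> 0\<close>] assms]
      by (intro derivative_eq_intros) auto
    show "\<bar>Y t a\<bar> \<le> R" using R[OF \<open>t \<ge> 0\<close> assms] by simp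
  next
    have "((\<lambda>t. g a (Y t a) - g a x_opt) \<longlongrightarrow> 0) at_top"
      using gradient_tendsto[OF assms] by (simp add: LIM_zero_iff)
    then have "((\<lambda>t. - (g a (Y t a) - g a x_opt) - laplacian (Y t) a) \<longlongrightarrow> - 0 - 0) at_top"
      by (intro tendsto_diff tendsto_minus laplacian_trajectory_tendsto_0 assms)
    then show "((\<lambda>t. - (g a (Y t a) - g a x_opt) - laplacian (Y t) a) \<longlongrightarrow> 0) at_top"
      by simp
    show "((\<lambda>t. - laplacian (\<lambda>v. laplacian (Y t) v) a) \<longlongrightarrow> 0) at_top"
      using tendsto_minus[OF tendsto_laplacian[of "\<lambda>t v. laplacian (Y t) v" "\<lambda>_. 0",
          OF laplacian_trajectory_tendsto_0 assms]] by simp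
  qed
  from tendsto_minus[OF this] show ?thesis by (simp add: add.commute)
qed

lemma sum_multiplier_const:
  assumes "t \<ge> 0"
  shows "(\<Sum>v\<in>V. \<Lambda> t v) = (\<Sum>v\<in>V. \<Lambda> 0 v)"
proof -
  have deriv: "((\<lambda>s. \<Sum>v\<in>V. \<Lambda> s v) has_real_derivative (\<Sum>v\<in>V. laplacian (Y s) v)) (at s within {0..})"
    if "s \<ge> 0" for s
    using \<Lambda>_deriv[OF that] by (rule DERIV_sum)
  obtain x where "(\<Sum>v\<in>V. \<Lambda> t v) - (\<Sum>v\<in>V. \<Lambda> 0 v) = (\<Sum>v\<in>V. laplacian (Y x) v) * (t - 0)"
    using mvt_nonneg_reals[OF deriv order_refl assms] by blast
  then show ?thesis by (simp add: sum_laplacian)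
qed


lemma multiplier_deviation_differences_tendsto_0:
  assumes L0: "is_equilibrium x_opt L0" and "a \<in> V" "b \<in> V"
  shows "((\<lambda>t. (\<Lambda> t a - L0 a) - (\<Lambda> t b - L0 b)) \<longlongrightarrow> 0) at_top"
proof -
  obtain R where R: "\<And>t v. t \<ge> 0 \<Longrightarrow> v \<in> V \<Longrightarrow> \<bar>Y t v\<bar> \<le> R \<and> \<bar>\<Lambda> t v\<bar> \<le> R"
    using trajectory_bounded by metis
  define D where "D t v = \<Lambda> t v - L0 v" for t v
  have laplacian_D: "((\<lambda>t. laplacian (D t) a) \<longlongrightarrow> 0) at_top" if "a \<in> V" for a
  proof -
    have "laplacian (D t) a = laplacian (\<Lambda> t) a + g a x_opt" for t
      using L0 that unfolding D_def is_equilibrium_def laplacian_diff by force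
    then show ?thesis using multiplier_residual_tendsto_0[OF that] by simp
  qed
  \<comment> \<open>\<open>D\<close> is bounded, so its Laplacian quadratic form vanishes along with its Laplacian\<close>
  have "((\<lambda>t. \<Sum>a\<in>V. D t a * laplacian (D t) a) \<longlongrightarrow> 0) at_top"
  proof (rule tendsto_null_sum)
    fix a assume "a \<in> V"
    show "((\<lambda>t. D t a * laplacian (D t) a) \<longlongrightarrow> 0) at_top"
    proof (rule Lim_null_comparison)
      show "eventually (\<lambda>t. norm (D t a * laplacian (D t) a) \<le> (R + \<bar>L0 a\<bar>) * \<bar>laplacian (D t) a\<bar>) at_top"
        using eventually_ge_at_top[of 0]
      proof eventually_elim
        fix t :: real assume "t \<ge> 0"
        then have "\<bar>D t a\<bar> \<le> R + \<bar>L0 a\<bar>" using R[OF _ \<open>a \<in> V\<close>] unfolding D_def by force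
        then show "norm (D t a * laplacian (D t) a) \<le> (R + \<bar>L0 a\<bar>) * \<bar>laplacian (D t) a\<bar>"
          by (simp add: abs_mult mult_right_mono)
      qed
      show "((\<lambda>t. (R + \<bar>L0 a\<bar>) * \<bar>laplacian (D t) a\<bar>) \<longlongrightarrow> 0) at_top"
        by (intro tendsto_mult_right_zero tendsto_rabs_zero laplacian_D \<open>a \<in> V\<close>)
    qed
  qed
  from differences_tendsto_0_if_laplacian_quadratic_tendsto_0[OF this assms(2,3)]
  show ?thesis unfolding D_def .
qed

lemma multiplier_convergent:
  obtains L where "\<And>a. a \<in> V \<Longrightarrow> ((\<lambda>t. \<Lambda> t a) \<longlongrightarrow> L a) at_top" "is_equilibrium x_opt L"
    "(\<Sum>v\<in>V. L v) = (\<Sum>v\<in>V. \<Lambda> 0 v)"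
proof -
  obtain L0 where L0: "is_equilibrium x_opt L0" using equilibrium_exists ..
  define S where "S = (\<Sum>v\<in>V. \<Lambda> 0 v) - (\<Sum>v\<in>V. L0 v)"
  have sum_deviation: "eventually (\<lambda>t. (\<Sum>v\<in>V. \<Lambda> t v - L0 v) = S) at_top"
    using eventually_ge_at_top[of 0]
  proof eventually_elim
    fix t :: real assume "t \<ge> 0"
    then show "(\<Sum>v\<in>V. \<Lambda> t v - L0 v) = S"
      using sum_multiplier_const[OF \<open>t \<ge> 0\<close>] by (simp add: S_def sum_subtractf)
  qed
  define L where "L v = L0 v + S / card V" for v
  have "((\<lambda>t. \<Lambda> t a - L0 a) \<longlongrightarrow> S / card V) at_top" if "a \<in> V" for a
    using tendsto_average_if_differences_tendsto_0[OF finite_V that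
        multiplier_deviation_differences_tendsto_0[OF L0 that] sum_deviation] .
  then have "((\<lambda>t. \<Lambda> t a) \<longlongrightarrow> L a) at_top" if "a \<in> V" for a
    using tendsto_add[OF _ tendsto_const[of "L0 a"]] that by (fastforce simp: L_def add.commute)
  moreover have "is_equilibrium x_opt L"
    using L0 by (simp add: is_equilibrium_def L_def[abs_def] laplacian_add)
  moreover have "(\<Sum>v\<in>V. L v) = (\<Sum>v\<in>V. \<Lambda> 0 v)"
    using finite_V V_nonempty by (simp add: L_def S_def sum.distrib)
  ultimately show ?thesis using that by blast
qed

lemma trajectory_limit_point:
  obtains l \<tau> where "filterlim \<tau> at_top sequentially" "\<And>a. a \<in> V \<Longrightarrow> (\<lambda>k. Y (\<tau> k) a) \<longlonglongrightarrow> l"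
proof -
  obtain R where R: "\<And>t v. t \<ge> 0 \<Longrightarrow> v \<in> V \<Longrightarrow> \<bar>Y t v\<bar> \<le> R \<and> \<bar>\<Lambda> t v\<bar> \<le> R"
    using trajectory_bounded by metis
  obtain a0 where "a0 \<in> V" using V_nonempty by blast
  have "bounded (range (\<lambda>k. Y (real k) a0))"
    unfolding bounded_iff using R[OF _ \<open>a0 \<in> V\<close>] by (intro exI[of _ R]) auto
  then obtain l r where r: "strict_mono r" "((\<lambda>k. Y (real k) a0) \<circ> r) \<longlonglongrightarrow> l"
    using bounded_imp_convergent_subsequence by blast
  define \<tau> where "\<tau> k = real (r k)" for k
  have \<tau>: "filterlim \<tau> at_top sequentially"
    unfolding \<tau>_def by (rule filterlim_compose[OF filterlim_real_sequentially filterlim_subseq[OF r(1)]])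
  have Y_\<tau>: "(\<lambda>k. Y (\<tau> k) a) \<longlonglongrightarrow> l" if "a \<in> V" for a
  proof -
    have "(\<lambda>k. Y (\<tau> k) a - Y (\<tau> k) a0) \<longlonglongrightarrow> 0"
      by (rule filterlim_compose[OF consensus_tendsto[OF that \<open>a0 \<in> V\<close>] \<tau>])
    from tendsto_add[OF this r(2)[unfolded comp_def, folded \<tau>_def]] show ?thesis by simp
  qed
  show ?thesis by (rule that[OF \<tau> Y_\<tau>])
qed

lemma trajectory_tendsto_if_lyapunov_tendsto_0:
  assumes "(lyapunov l L \<longlongrightarrow> 0) at_top" "a \<in> V"
  shows "((\<lambda>t. Y t a) \<longlongrightarrow> l) at_top"
proof -
  have bound: "norm ((Y t a - l)^2) \<le> 2 * lyapunov l L t" for t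
    using lyapunov_component_le[OF assms(2), of t l L] zero_le_power2[of "\<Lambda> t a - L a"]
    by (simp only: real_norm_def abs_power2)
  have "((\<lambda>t. (Y t a - l)^2) \<longlongrightarrow> 0) at_top"
    by (rule Lim_null_comparison[OF always_eventually[OF allI[OF bound]] tendsto_mult_right_zero[OF assms(1)]])
  then show ?thesis by (simp add: LIM_zero_iff)
qed

lemma primal_convergent:
  assumes \<Lambda>_lim: "\<And>a. a \<in> V \<Longrightarrow> ((\<lambda>t. \<Lambda> t a) \<longlongrightarrow> L a) at_top" and "is_equilibrium x_opt L"
  obtains l where "\<And>a. a \<in> V \<Longrightarrow> ((\<lambda>t. Y t a) \<longlongrightarrow> l) at_top" "is_equilibrium l L"
proof -
  obtain l \<tau> where \<tau>: "filterlim \<tau> at_top sequentially"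
    and Y_\<tau>: "\<And>a. a \<in> V \<Longrightarrow> (\<lambda>k. Y (\<tau> k) a) \<longlonglongrightarrow> l"
    using trajectory_limit_point by blast
  \<comment> \<open>the limit point has the same gradients as the optimum, hence is again an equilibrium\<close>
  have "g a l = g a x_opt" if "a \<in> V" for a
  proof (rule LIMSEQ_unique)
    show "(\<lambda>k. g a (Y (\<tau> k) a)) \<longlonglongrightarrow> g a l"
      by (rule isCont_tendsto_compose[OF g_continuous[OF that] Y_\<tau>[OF that]])
    show "(\<lambda>k. g a (Y (\<tau> k) a)) \<longlonglongrightarrow> g a x_opt"
      by (rule filterlim_compose[OF gradient_tendsto[OF that] \<tau>])
  qed
  then have eq: "is_equilibrium l L" using assms(2) by (simp add: is_equilibrium_def)
  have lyapunov_\<tau>: "(\<lambda>k. lyapunov l L (\<tau> k)) \<longlonglongrightarrow> 0"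
    unfolding lyapunov_def
  proof (rule tendsto_null_sum)
    fix a assume "a \<in> V"
    have "(\<lambda>k. ((Y (\<tau> k) a - l)^2 + (\<Lambda> (\<tau> k) a - L a)^2) / 2)
        \<longlonglongrightarrow> ((l - l)^2 + (L a - L a)^2) / 2"
      by (intro tendsto_intros Y_\<tau> \<open>a \<in> V\<close> filterlim_compose[OF \<Lambda>_lim \<tau>]) simp_all
    then show "(\<lambda>k. ((Y (\<tau> k) a - l)^2 + (\<Lambda> (\<tau> k) a - L a)^2) / 2) \<longlonglongrightarrow> 0" by simp
  qed
  have "(lyapunov l L \<longlongrightarrow> 0) at_top"
    using lyapunov_antimono[OF eq] lyapunov_nonneg
    by (rule antimono_tendsto_0_from_sequence[OF _ _ \<tau> lyapunov_\<tau>])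
  with eq show ?thesis
    using that trajectory_tendsto_if_lyapunov_tendsto_0 by blast
qed

theorem saddle_flow_convergent:
  obtains l L where "\<And>a. a \<in> V \<Longrightarrow> ((\<lambda>t. Y t a) \<longlongrightarrow> l) at_top"
    "\<And>a. a \<in> V \<Longrightarrow> ((\<lambda>t. \<Lambda> t a) \<longlongrightarrow> L a) at_top"
    "is_equilibrium l L" "(\<Sum>v\<in>V. L v) = (\<Sum>v\<in>V. \<Lambda> 0 v)"
proof -
  obtain L where L: "\<And>a. a \<in> V \<Longrightarrow> ((\<lambda>t. \<Lambda> t a) \<longlongrightarrow> L a) at_top" "is_equilibrium x_opt L"
    "(\<Sum>v\<in>V. L v) = (\<Sum>v\<in>V. \<Lambda> 0 v)"
    using multiplier_convergent by blast
  moreover obtain l where "\<And>a. a \<in> V \<Longrightarrow> ((\<lambda>t. Y t a) \<longlongrightarrow> l) at_top" "is_equilibrium l L"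
    using primal_convergent[OF L(1,2)] by blast
  ultimately show ?thesis using that by blast
qed

end

section \<open>Convex and twice differentiable functions\<close>

lemma deriv_mono_if_convex:
  fixes f :: "real \<Rightarrow> real"
  assumes "convex_on UNIV f" "\<And>x. (f has_real_derivative f' x) (at x)" "x \<le> y"
  shows "f' x \<le> f' y"
proof -
  have "f y - f x \<ge> f' x * (y - x)" "f x - f y \<ge> f' y * (x - y)"
    using assms(1,2) by (auto intro!: convex_on_imp_above_tangent)
  then have "0 \<le> (f' y - f' x) * (y - x)" by (simp add: algebra_simps)
  with \<open>x \<le> y\<close> show ?thesis by (cases "x = y") (auto simp: zero_le_mult_iff)
qed

lemma lipschitz_on_Icc_if_continuous_deriv:
  fixes g :: "real \<Rightarrow> real"
  assumes deriv: "\<And>x. (g has_real_derivative g' x) (at x)" and "continuous_on UNIV g'"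
  shows "\<exists>K. K-lipschitz_on {a..b} g"
proof -
  have "continuous_on {a..b} g'" using assms(2) by (rule continuous_on_subset) simp
  then have "bounded (g' ` {a..b})" by (intro compact_imp_bounded compact_continuous_image compact_Icc)
  then obtain B where "\<forall>y\<in>g' ` {a..b}. norm y \<le> B" unfolding bounded_iff by blast
  then have B: "\<And>x. x \<in> {a..b} \<Longrightarrow> \<bar>g' x\<bar> \<le> B" by simp
  have "\<bar>B\<bar>-lipschitz_on {a..b} g"
  proof (rule lipschitz_onI)
    fix x y assume xy: "x \<in> {a..b}" "y \<in> {a..b}"
    have "norm (g x - g y) \<le> \<bar>B\<bar> * norm (x - y)"
    proof (rule field_differentiable_bound[OF convex_real_interval(5) _ _ xy])
      show "(g has_field_derivative g' z) (at z within {a..b})" for z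
        using deriv by (rule has_field_derivative_at_within)
      show "norm (g' z) \<le> \<bar>B\<bar>" if "z \<in> {a..b}" for z
        using B[OF that] by simp
    qed
    then show "dist (g x) (g y) \<le> \<bar>B\<bar> * dist x y" by (simp add: dist_real_def)
  qed simp
  then show ?thesis ..
qed

lemma has_real_derivative_deriv_if_C2:
  assumes "\<exists>f' f''. (\<forall>x. (f has_real_derivative f' x) (at x))
    \<and> (\<forall>x. (f' has_real_derivative f'' x) (at x)) \<and> continuous_on UNIV f''"
  shows "(f has_real_derivative deriv f x) (at x)"
  using assms by (metis DERIV_imp_deriv)

lemma lipschitz_on_deriv_if_C2:
  assumes "\<exists>f' f''. (\<forall>x. (f has_real_derivative f' x) (at x))
    \<and> (\<forall>x. (f' has_real_derivative f'' x) (at x)) \<and> continuous_on UNIV f''"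
  shows "\<exists>K. K-lipschitz_on {a..b} (deriv f)"
proof -
  obtain f' f'' where f': "\<forall>x. (f has_real_derivative f' x) (at x)"
    and f'': "\<forall>x. (f' has_real_derivative f'' x) (at x)" "continuous_on UNIV f''"
    using assms by blast
  have "deriv f = f'" using f' by (auto intro: DERIV_imp_deriv)
  then show ?thesis using lipschitz_on_Icc_if_continuous_deriv f'' by blast
qed

lemma sum_deriv_eq_0_if_minimizer:
  assumes "\<And>v x. v \<in> V \<Longrightarrow> (f v has_real_derivative f' v x) (at x)"
    and "\<And>z. (\<Sum>v\<in>V. f v x) \<le> (\<Sum>v\<in>V. f v z)"
  shows "(\<Sum>v\<in>V. f' v x) = 0"
proof (rule DERIV_local_min[of _ _ _ 1])
  show "((\<lambda>z. \<Sum>v\<in>V. f v z) has_real_derivative (\<Sum>v\<in>V. f' v x)) (at x)"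
    using assms(1) by (rule DERIV_sum)
qed (use assms(2) in auto)

lemma sum_minimizer_if_sum_deriv_eq_0:
  assumes "finite V" "\<And>v. v \<in> V \<Longrightarrow> convex_on UNIV (f v)"
    and "\<And>v x. v \<in> V \<Longrightarrow> (f v has_real_derivative f' v x) (at x)"
    and "(\<Sum>v\<in>V. f' v x) = 0"
  shows "(\<Sum>v\<in>V. f v x) \<le> (\<Sum>v\<in>V. f v z)"
proof -
  have "f v x + f' v x * (z - x) \<le> f v z" if "v \<in> V" for v
    using convex_on_imp_above_tangent[of UNIV "f v" x z "f' v x"] assms(2,3)[OF that] by simp
  then have "(\<Sum>v\<in>V. f v x + f' v x * (z - x)) \<le> (\<Sum>v\<in>V. f v z)"
    by (rule sum_mono)
  with assms(4) show ?thesis by (simp add: sum.distrib sum_distrib_right[symmetric])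
qed

section \<open>Multilayer networks\<close>

lemma convex_on_component:
  assumes "finite V" "ftilde_convex V f" "v \<in> V"
  shows "convex_on UNIV (f v)"
proof (rule convex_onI)
  fix t x y :: real assume "0 < t" "t < 1"
  define X where "X z u = (if u = v then z else 0 :: real)" for z u
  have ftilde_X: "ftilde V f (X z) = f v z + (\<Sum>u\<in>V - {v}. f u 0)" for z
    unfolding ftilde_def X_def using assms(1,3) by (simp add: sum.remove)
  have "ftilde V f (\<lambda>u. (1 - t) * X x u + t * X y u) \<le> (1 - t) * ftilde V f (X x) + t * ftilde V f (X y)"
    using assms(2) \<open>0 < t\<close> \<open>t < 1\<close> unfolding ftilde_convex_def by simp
  moreover have "(\<lambda>u. (1 - t) * X x u + t * X y u) = X ((1 - t) * x + t * y)"
    by (auto simp: X_def)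
  ultimately have "ftilde V f (X ((1 - t) * x + t * y)) \<le> (1 - t) * ftilde V f (X x) + t * ftilde V f (X y)"
    by simp
  then show "f v ((1 - t) *\<^sub>R x + t *\<^sub>R y) \<le> (1 - t) * f v x + t * f v y"
    unfolding ftilde_X by (simp add: algebra_simps)
qed simp

lemma nodes_finite: "finite (nodes M N)"
proof (rule finite_subset)
  show "nodes M N \<subseteq> {0..(\<Sum>h\<in>{1..M}. N h)} \<times> {0..M}"
  proof
    fix x assume "x \<in> nodes M N"
    then obtain i h where x: "x = (i, h)" "1 \<le> h" "h \<le> M" "i \<le> N h"
      unfolding nodes_def by auto
    moreover have "N h \<le> (\<Sum>h\<in>{1..M}. N h)" using x by (intro member_le_sum) auto
    ultimately show "x \<in> {0..(\<Sum>h\<in>{1..M}. N h)} \<times> {0..M}" by auto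
  qed
qed auto

definition node_weight :: "(nat \<Rightarrow> nat \<Rightarrow> nat \<Rightarrow> nat \<Rightarrow> real) \<Rightarrow> node \<Rightarrow> node \<Rightarrow> real" where
  "node_weight w = (\<lambda>(i, h) (j, k). w i j h k)"

locale multilayer_network =
  fixes M :: nat and N :: "nat \<Rightarrow> nat" and w :: "nat \<Rightarrow> nat \<Rightarrow> nat \<Rightarrow> nat \<Rightarrow> real"
  assumes M_pos: "M \<ge> 1"
    and N_pos: "\<forall>h\<in>{1..M}. N h \<ge> 1"
    and w_nonneg: "\<forall>(i,h)\<in>nodes M N. \<forall>(j,k)\<in>nodes M N. w i j h k \<ge> 0"
    and undirected: "ml_undirected (nodes M N) w"
    and connected: "ml_connected (nodes M N) w"
begin

sublocale weighted_graph "nodes M N" "node_weight w"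
proof
  show "finite (nodes M N)" by (rule nodes_finite)
  have "(1, 1) \<in> nodes M N" using M_pos N_pos by (auto simp: nodes_def)
  then show "nodes M N \<noteq> {}" by blast
  show "node_weight w a b = node_weight w b a" if "a \<in> nodes M N" "b \<in> nodes M N" for a b
    using undirected that unfolding ml_undirected_def node_weight_def by (auto split: prod.splits)
  show "0 \<le> node_weight w a b" if "a \<in> nodes M N" "b \<in> nodes M N" for a b
    using w_nonneg that unfolding node_weight_def by (auto split: prod.splits)
  show "(a, b) \<in> {(x, y). x \<in> nodes M N \<and> y \<in> nodes M N \<and> 0 < node_weight w x y}\<^sup>*"
    if "a \<in> nodes M N" "b \<in> nodes M N" for a b
    using connected that unfolding ml_connected_def node_weight_def
    by (simp add: case_prod_beta' split_beta')
qed

lemma ml_laplacian_eq_laplacian: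
  assumes "a \<in> nodes M N"
  shows "ml_laplacian (nodes M N) w T a = laplacian T a"
proof -
  have "ml_laplacian (nodes M N) w T a = (\<Sum>b\<in>nodes M N.
      ((\<Sum>c\<in>nodes M N. node_weight w c a) * (if b = a then 1 else 0) - node_weight w a b) * T b)"
    unfolding ml_laplacian_def node_weight_def
    by (simp add: case_prod_beta prod_eq_iff, intro sum.cong refl) auto
  also have "\<dots> = (\<Sum>b\<in>nodes M N. (if b = a then (\<Sum>c\<in>nodes M N. node_weight w c a) * T b else 0))
      - (\<Sum>b\<in>nodes M N. node_weight w a b * T b)"
    by (subst sum_subtractf[symmetric]) (rule sum.cong, auto simp: algebra_simps)
  also have "\<dots> = (\<Sum>c\<in>nodes M N. node_weight w a c) * T a - (\<Sum>b\<in>nodes M N. node_weight w a b * T b)"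
    using assms finite_V W_sym by (simp add: sum.delta')
  finally show ?thesis by (simp add: laplacian_eq)
qed

lemma ml_inner_ml_laplacian:
  "ml_inner (nodes M N) X (ml_laplacian (nodes M N) w Z) = (\<Sum>v\<in>nodes M N. X v * laplacian Z v)"
  unfolding ml_inner_def by (intro sum.cong) (simp_all add: ml_laplacian_eq_laplacian)

lemma is_saddle_point_if_equilibrium:
  assumes convex: "\<And>v. v \<in> nodes M N \<Longrightarrow> convex_on UNIV (f v)"
    and deriv: "\<And>v x. v \<in> nodes M N \<Longrightarrow> (f v has_real_derivative g v x) (at x)"
    and equilibrium: "\<And>v. v \<in> nodes M N \<Longrightarrow> g v l + laplacian L v = 0"
  shows "is_saddle_point (nodes M N) w f (\<lambda>_. l) L"
proof -
  have laplacian_L: "laplacian L v = - g v l" if "v \<in> nodes M N" for v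
    using equilibrium[OF that] by linarith
  have "(\<Sum>v\<in>nodes M N. g v l) = (\<Sum>v\<in>nodes M N. - laplacian L v)"
    by (intro sum.cong) (simp_all add: laplacian_L)
  then have sum_g: "(\<Sum>v\<in>nodes M N. g v l) = 0" by (simp add: sum_negf sum_laplacian)
  have tangent: "ftilde (nodes M N) f (\<lambda>_. l) + (\<Sum>v\<in>nodes M N. g v l * Z v) \<le> ftilde (nodes M N) f Z"
    for Z
  proof -
    have "f v l + g v l * (Z v - l) \<le> f v (Z v)" if "v \<in> nodes M N" for v
      using convex_on_imp_above_tangent[of UNIV "f v" l "Z v" "g v l"] convex[OF that] deriv[OF that]
      by simp
    then have "(\<Sum>v\<in>nodes M N. f v l + g v l * (Z v - l)) \<le> ftilde (nodes M N) f Z"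
      unfolding ftilde_def by (rule sum_mono)
    then show ?thesis
      using sum_g by (simp add: ftilde_def sum.distrib right_diff_distrib sum_subtractf
          sum_distrib_right[symmetric])
  qed
  \<comment> \<open>the multiplier pairs with \<open>Z\<close> exactly as the gradient does, by symmetry of the Laplacian\<close>
  have coupling: "(\<Sum>v\<in>nodes M N. L v * laplacian Z v) = - (\<Sum>v\<in>nodes M N. g v l * Z v)"
    for Z
  proof -
    have "(\<Sum>v\<in>nodes M N. Z v * laplacian L v) = (\<Sum>v\<in>nodes M N. - (g v l * Z v))"
      by (intro sum.cong) (simp_all add: laplacian_L)
    then show ?thesis
      by (simp add: laplacian_symmetric[of L] sum_negf)
  qed
  have consensus: "ml_inner (nodes M N) X (ml_laplacian (nodes M N) w (\<lambda>_. l)) = 0" for X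
    by (simp add: ml_inner_ml_laplacian)
  show ?thesis
    unfolding is_saddle_point_def
  proof (intro allI conjI)
    fix Z \<Lambda> :: tensor
    show "aug_lagrangian (nodes M N) w f (\<lambda>_. l) \<Lambda> \<le> aug_lagrangian (nodes M N) w f (\<lambda>_. l) L"
      by (simp add: aug_lagrangian_def consensus)
    show "aug_lagrangian (nodes M N) w f (\<lambda>_. l) L \<le> aug_lagrangian (nodes M N) w f Z L"
      unfolding aug_lagrangian_def consensus ml_inner_ml_laplacian coupling
      using tangent[of Z] laplacian_quadratic_nonneg[of Z] by linarith
  qed
qed

lemma saddle_flow_gradient:
  assumes f_convex: "\<And>v. v \<in> nodes M N \<Longrightarrow> convex_on UNIV (f v)"
    and f_deriv: "\<And>v x. v \<in> nodes M N \<Longrightarrow> (f v has_real_derivative deriv (f v) x) (at x)"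
    and f'_lipschitz: "\<And>v R. v \<in> nodes M N \<Longrightarrow> \<exists>K. K-lipschitz_on {-R..R} (deriv (f v))"
    and x_opt: "\<And>z. (\<Sum>v\<in>nodes M N. f v x_opt) \<le> (\<Sum>v\<in>nodes M N. f v z)"
    and dY: "\<forall>t\<ge>0. \<forall>v\<in>nodes M N. ((\<lambda>s. Y s v) has_real_derivative
               (- grad_ftilde f (Y t) v - ml_laplacian (nodes M N) w (Y t) v
                - ml_laplacian (nodes M N) w (Lam t) v)) (at t within {0..})"
    and dLam: "\<forall>t\<ge>0. \<forall>v\<in>nodes M N. ((\<lambda>s. Lam s v) has_real_derivative
               ml_laplacian (nodes M N) w (Y t) v) (at t within {0..})"
  shows "saddle_flow (nodes M N) (node_weight w) (\<lambda>v. deriv (f v)) Y Lam x_opt"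
proof
  show "deriv (f v) x \<le> deriv (f v) y" if "v \<in> nodes M N" "x \<le> y" for v x y
    using deriv_mono_if_convex[OF f_convex f_deriv] that by blast
  show "(\<Sum>v\<in>nodes M N. deriv (f v) x_opt) = 0"
    using f_deriv x_opt by (rule sum_deriv_eq_0_if_minimizer)
  show "((\<lambda>s. Y s v) has_real_derivative
      - deriv (f v) (Y t v) - laplacian (Y t) v - laplacian (Lam t) v) (at t within {0..})"
    if "t \<ge> 0" "v \<in> nodes M N" for t v
    using dY that by (simp add: ml_laplacian_eq_laplacian grad_ftilde_def)
  show "((\<lambda>s. Lam s v) has_real_derivative laplacian (Y t) v) (at t within {0..})"
    if "t \<ge> 0" "v \<in> nodes M N" for t v
    using dLam that by (simp add: ml_laplacian_eq_laplacian)
qed (rule f'_lipschitz)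



end

theorem theorem2:
  fixes M :: nat and N :: "nat \<Rightarrow> nat"
    and w :: "nat \<Rightarrow> nat \<Rightarrow> nat \<Rightarrow> nat \<Rightarrow> real"
    and f :: "node \<Rightarrow> real \<Rightarrow> real"
    and Y Lam :: "real \<Rightarrow> tensor"
  assumes M_pos: "M \<ge> 1"
    and N_pos: "\<forall>h\<in>{1..M}. N h \<ge> 1"
    and w_nonneg: "\<forall>(i,h)\<in>nodes M N. \<forall>(j,k)\<in>nodes M N. w i j h k \<ge> 0"
    and undirected: "ml_undirected (nodes M N) w"
    and connected: "ml_connected (nodes M N) w"
    and C2: "\<forall>v\<in>nodes M N. \<exists>f' f''. (\<forall>x. (f v has_real_derivative f' x) (at x))
                 \<and> (\<forall>x. (f' has_real_derivative f'' x) (at x)) \<and> continuous_on UNIV f''"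
    and convex: "ftilde_convex (nodes M N) f"
    and primal_solvable: "\<exists>x. \<forall>z. (\<Sum>v\<in>nodes M N. f v x) \<le> (\<Sum>v\<in>nodes M N. f v z)"
    and dY: "\<forall>t\<ge>0. \<forall>v\<in>nodes M N. ((\<lambda>s. Y s v) has_real_derivative
               (- grad_ftilde f (Y t) v - ml_laplacian (nodes M N) w (Y t) v
                - ml_laplacian (nodes M N) w (Lam t) v)) (at t within {0..})"
    and dLam: "\<forall>t\<ge>0. \<forall>v\<in>nodes M N. ((\<lambda>s. Lam s v) has_real_derivative
               ml_laplacian (nodes M N) w (Y t) v) (at t within {0..})"
  shows "\<exists>Ys Ls xs Lbar.
           (\<forall>v\<in>nodes M N. ((\<lambda>t. Y t v) \<longlongrightarrow> Ys v) at_top)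
         \<and> (\<forall>v\<in>nodes M N. ((\<lambda>t. Lam t v) \<longlongrightarrow> Ls v) at_top)
         \<and> is_saddle_point (nodes M N) w f Ys Ls
         \<and> (\<forall>z. (\<Sum>v\<in>nodes M N. f v xs) \<le> (\<Sum>v\<in>nodes M N. f v z))
         \<and> (\<forall>v\<in>nodes M N. Ys v = xs * ones v)
         \<and> ml_inner (nodes M N) Lbar ones = 0
         \<and> (\<forall>v\<in>nodes M N. ml_laplacian (nodes M N) w Lbar v + grad_ftilde f Ys v = 0)
         \<and> (\<forall>v\<in>nodes M N. Ls v = Lbar v
               + ((\<Sum>u\<in>nodes M N. Lam 0 u) / real (card (nodes M N))) * ones v)"
proof -
  interpret multilayer_network M N w
    using M_pos N_pos w_nonneg undirected connected by unfold_locales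
  have f_deriv: "\<And>v x. v \<in> nodes M N \<Longrightarrow> (f v has_real_derivative deriv (f v) x) (at x)"
    using C2 has_real_derivative_deriv_if_C2 by blast
  have f_convex: "\<And>v. v \<in> nodes M N \<Longrightarrow> convex_on UNIV (f v)"
    using convex_on_component[OF nodes_finite convex] .
  obtain x_opt where x_opt: "\<And>z. (\<Sum>v\<in>nodes M N. f v x_opt) \<le> (\<Sum>v\<in>nodes M N. f v z)"
    using primal_solvable by blast
  have f'_lipschitz: "\<And>v R. v \<in> nodes M N \<Longrightarrow> \<exists>K. K-lipschitz_on {-R..R} (deriv (f v))"
    using C2 by (simp add: lipschitz_on_deriv_if_C2)
  interpret saddle_flow "nodes M N" "node_weight w" "\<lambda>v. deriv (f v)" Y Lam x_opt
    using f_convex f_deriv f'_lipschitz x_opt dY dLam by (rule saddle_flow_gradient)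
  obtain l L where Y_lim: "\<And>a. a \<in> nodes M N \<Longrightarrow> ((\<lambda>t. Y t a) \<longlongrightarrow> l) at_top"
    and Lam_lim: "\<And>a. a \<in> nodes M N \<Longrightarrow> ((\<lambda>t. Lam t a) \<longlongrightarrow> L a) at_top"
    and equilibrium: "is_equilibrium l L" and sum_L: "(\<Sum>v\<in>nodes M N. L v) = (\<Sum>v\<in>nodes M N. Lam 0 v)"
    using saddle_flow_convergent by blast
  define c where "c = (\<Sum>u\<in>nodes M N. Lam 0 u) / real (card (nodes M N))"
  have "is_saddle_point (nodes M N) w f (\<lambda>_. l) L"
    using equilibrium f_convex f_deriv unfolding is_equilibrium_def
    by (intro is_saddle_point_if_equilibrium[where g = "\<lambda>v. deriv (f v)"]) auto
  moreover have "(\<Sum>v\<in>nodes M N. f v l) \<le> (\<Sum>v\<in>nodes M N. f v z)" for z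
    using nodes_finite f_convex f_deriv sum_gradient_eq_0_if_equilibrium[OF equilibrium]
    by (rule sum_minimizer_if_sum_deriv_eq_0)
  moreover have "ml_inner (nodes M N) (\<lambda>v. L v - c) ones = 0"
    using sum_L finite_V V_nonempty by (simp add: ml_inner_def ones_def sum_subtractf c_def)
  moreover have "ml_laplacian (nodes M N) w (\<lambda>v. L v - c) v + grad_ftilde f (\<lambda>_. l) v = 0"
    if "v \<in> nodes M N" for v
    using equilibrium that
    by (simp add: ml_laplacian_eq_laplacian laplacian_diff grad_ftilde_def is_equilibrium_def add.commute)
  ultimately show ?thesis
    using Y_lim Lam_lim
    by (intro exI[of _ "\<lambda>_. l"] exI[of _ L] exI[of _ l] exI[of _ "\<lambda>v. L v - c"])
      (auto simp: ones_def c_def)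
qed

end
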